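(* Let $\mathcal L$ be a finite language consisting of relation and/or constant symbols, and let $\mathcal H$ be a non-trivial basic hereditary $\mathcal L$-property. Then there are $k\in\mathbb N$ and polynomials $p_1,\dots,p_k$ with rational coefficients such that $|\mathcal H_n|=\sum_{i=1}^k p_i(n)i^n$ for all sufficiently large $n$.
   Context: A hereditary $\mathcal L$-property is a class $\mathcal H$ of $\mathcal L$-structures (finite or infinite) closed under isomorphism and under substructures (a substructure contains the interpretations of all constants). $\mathcal H_n$ is the set of members of $\mathcal H$ with underlying set $[n]$. $\mathcal H$ is trivial if $\mathcal H_n=\emptyset$ for all sufficiently large $n$. For an $\mathcal L$-structure $\mathcal M$ and $a,b\in M$, write $a\sim b$ iff the permutation of $M$ exchanging $a$ and $b$ and fixing all other elements is an automorphism of $\mathcal M$ (equivalently, $ab$ and $ba$ have the same quantifier-free type over $M\setminus\{a,b\}$); this is an equivalence relation. $\mathcal H$ is basic if there is $k\in\mathbb N$ such that every member of $\mathcal H$ has at most $k$ distinct $\sim$-classes. *)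

theory Defs
  imports Main "HOL-Computational_Algebra.Polynomial"
begin

text \<open>A finite language: a finite set R of relation symbols with arities ar,
and a finite set C of constant symbols.\<close>

record ('r, 'c) struc =
  carrier :: "nat set"
  rel :: "'r \<Rightarrow> nat list \<Rightarrow> bool"
  cst :: "'c \<Rightarrow> nat"

text \<open>Well-formedness (canonical representation): relations only hold of
tuples of the right length from the carrier and only for symbols in R;
constants lie in the carrier; unused constant symbols are mapped to 0.\<close>
definition wf_struc :: "'r set \<Rightarrow> ('r \<Rightarrow> nat) \<Rightarrow> 'c set \<Rightarrow> ('r, 'c) struc \<Rightarrow> bool" where
  "wf_struc R ar C M \<longleftrightarrow>
     (\<forall>r xs. rel M r xs \<longrightarrow> r \<in> R \<and> length xs = ar r \<and> set xs \<subseteq> carrier M) \<and>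
     (\<forall>c\<in>C. cst M c \<in> carrier M) \<and> (\<forall>c. c \<notin> C \<longrightarrow> cst M c = 0)"

definition is_iso :: "'r set \<Rightarrow> ('r \<Rightarrow> nat) \<Rightarrow> 'c set \<Rightarrow> (nat \<Rightarrow> nat) \<Rightarrow> ('r, 'c) struc \<Rightarrow> ('r, 'c) struc \<Rightarrow> bool" where
  "is_iso R ar C f M N \<longleftrightarrow>
     bij_betw f (carrier M) (carrier N) \<and>
     (\<forall>r\<in>R. \<forall>xs. length xs = ar r \<and> set xs \<subseteq> carrier M \<longrightarrow> (rel N r (map f xs) \<longleftrightarrow> rel M r xs)) \<and>
     (\<forall>c\<in>C. cst N c = f (cst M c))"

definition substruc :: "'r set \<Rightarrow> ('r \<Rightarrow> nat) \<Rightarrow> 'c set \<Rightarrow> ('r, 'c) struc \<Rightarrow> ('r, 'c) struc \<Rightarrow> bool" where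
  "substruc R ar C N M \<longleftrightarrow>
     wf_struc R ar C N \<and> carrier N \<subseteq> carrier M \<and>
     (\<forall>r xs. rel N r xs \<longleftrightarrow> rel M r xs \<and> set xs \<subseteq> carrier N) \<and>
     cst N = cst M"

definition hereditary :: "'r set \<Rightarrow> ('r \<Rightarrow> nat) \<Rightarrow> 'c set \<Rightarrow> ('r, 'c) struc set \<Rightarrow> bool" where
  "hereditary R ar C H \<longleftrightarrow>
     (\<forall>M\<in>H. wf_struc R ar C M) \<and>
     (\<forall>M\<in>H. \<forall>N f. wf_struc R ar C N \<and> is_iso R ar C f M N \<longrightarrow> N \<in> H) \<and>
     (\<forall>M\<in>H. \<forall>N. substruc R ar C N M \<longrightarrow> N \<in> H)"

definition transp_map :: "nat \<Rightarrow> nat \<Rightarrow> nat \<Rightarrow> nat" where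
  "transp_map a b x = (if x = a then b else if x = b then a else x)"

definition swap_equiv :: "'r set \<Rightarrow> ('r \<Rightarrow> nat) \<Rightarrow> 'c set \<Rightarrow> ('r, 'c) struc \<Rightarrow> (nat \<times> nat) set" where
  "swap_equiv R ar C M =
     {(a, b). a \<in> carrier M \<and> b \<in> carrier M \<and> is_iso R ar C (transp_map a b) M M}"

definition basic :: "'r set \<Rightarrow> ('r \<Rightarrow> nat) \<Rightarrow> 'c set \<Rightarrow> ('r, 'c) struc set \<Rightarrow> bool" where
  "basic R ar C H \<longleftrightarrow>
     (\<exists>k::nat. \<forall>M\<in>H. finite (carrier M // swap_equiv R ar C M) \<and>
                       card (carrier M // swap_equiv R ar C M) \<le> k)"

definition H_n :: "('r, 'c) struc set \<Rightarrow> nat \<Rightarrow> ('r, 'c) struc set" where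
  "H_n H n = {M \<in> H. carrier M = {1..n}}"

definition trivial :: "('r, 'c) struc set \<Rightarrow> bool" where
  "trivial H \<longleftrightarrow> (\<exists>N. \<forall>n\<ge>N. H_n H n = {})"

end

theory Submission
  imports Defs "HOL-Library.FuncSet" "HOL-Library.Infinite_Set" "HOL-Library.Nat_Bijection"
    "HOL-Combinatorics.Permutations"
begin

(* Colour the universe of a structure M by its ~-classes.  If M has m classes, exactly m! onto
   colourings with m colours have ~ as their kernel, hence
     |H_n| = sum over m <= k of (1/m!) * sum over onto phi : [n] -> [m] of w_m(class sizes of phi),
   where w_m(s) counts the members of H whose ~-classes are the colour classes of a fixed colouring
   with class sizes s.  Transpositions inside a class are automorphisms, so once a class has at least
   (maximal arity + 2) elements, restriction to a smaller class is injective on such structures: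
   w_m is antitone in each coordinate above that threshold, and a Dickson-type argument shows that
   it is eventually constant in each coordinate.  Summing such a weight over all colourings of [n]
   gives a rational linear combination of the sequences C(n,j) i^(n-j), which are exponential
   polynomials for large n. *)

section \<open>Exponential polynomial sequences\<close>

definition binom_pow :: "nat \<Rightarrow> nat \<Rightarrow> nat \<Rightarrow> rat" where
  "binom_pow i j n = of_nat (n choose j) * of_nat i ^ (n - j)"

inductive_set binom_pow_span :: "(nat \<Rightarrow> rat) set" where
  binom_pow: "binom_pow i j \<in> binom_pow_span"
| add: "a \<in> binom_pow_span \<Longrightarrow> b \<in> binom_pow_span \<Longrightarrow> (\<lambda>n. a n + b n) \<in> binom_pow_span"
| smult: "a \<in> binom_pow_span \<Longrightarrow> (\<lambda>n. c * a n) \<in> binom_pow_span"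

lemma binom_pow_span_cong: "a \<in> binom_pow_span \<Longrightarrow> (\<And>n. a n = b n) \<Longrightarrow> b \<in> binom_pow_span"
  by (metis ext)

lemma binom_pow_span_zero: "(\<lambda>n. 0) \<in> binom_pow_span"
  using binom_pow_span.smult[OF binom_pow_span.binom_pow, of 0 0 0] by simp

lemma binom_pow_span_sum:
  "finite A \<Longrightarrow> (\<And>x. x \<in> A \<Longrightarrow> f x \<in> binom_pow_span) \<Longrightarrow> (\<lambda>n. \<Sum>x\<in>A. f x n) \<in> binom_pow_span"
  by (induction A rule: finite_induct) (auto intro: binom_pow_span_zero binom_pow_span.add)

lemma binom_pow_span_diff:
  "a \<in> binom_pow_span \<Longrightarrow> b \<in> binom_pow_span \<Longrightarrow> (\<lambda>n. a n - b n) \<in> binom_pow_span"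
  using binom_pow_span.add[of a "\<lambda>n. (-1) * b n"] binom_pow_span.smult[of b "-1"] by simp

lemma binom_pow_span_indicator: "(\<lambda>n. if n = v then 1 else 0) \<in> binom_pow_span"
proof (rule binom_pow_span_cong[OF binom_pow_span.binom_pow[of 0 v]])
  fix n show "binom_pow 0 v n = (if n = v then 1 else 0)"
    by (cases "n < v") (auto simp: binom_pow_def)
qed

lemma choose_mult_shift:
  "(n choose v) * ((n - v) choose j) = ((v + j) choose v) * (n choose (v + j))"
proof (cases "v + j \<le> n")
  case True
  then show ?thesis using choose_mult[of v "v + j" n] by (simp add: mult.commute)
next
  case False
  then show ?thesis by (cases "v \<le> n") (simp_all add: binomial_eq_0)
qed

lemma binom_pow_span_shift:
  "a \<in> binom_pow_span \<Longrightarrow> (\<lambda>n. of_nat (n choose v) * a (n - v)) \<in> binom_pow_span"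
proof (induction rule: binom_pow_span.induct)
  case (binom_pow i j)
  have "(\<lambda>n. of_nat ((v + j) choose v) * binom_pow i (v + j) n) \<in> binom_pow_span"
    by (rule binom_pow_span.smult[OF binom_pow_span.binom_pow])
  then show ?case
  proof (rule binom_pow_span_cong)
    fix n
    have "of_nat (n choose v) * binom_pow i j (n - v) =
          (of_nat ((n choose v) * ((n - v) choose j)) :: rat) * of_nat i ^ (n - v - j)"
      by (simp add: binom_pow_def)
    also have "\<dots> = of_nat ((v + j) choose v) * binom_pow i (v + j) n"
      by (simp only: choose_mult_shift) (simp add: binom_pow_def diff_diff_left)
    finally show "of_nat ((v + j) choose v) * binom_pow i (v + j) n = of_nat (n choose v) * binom_pow i j (n - v)"
      by simp
  qed
next
  case (add a b)
  from binom_pow_span.add[OF add.IH] show ?case by (simp add: algebra_simps)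
next
  case (smult a c)
  from binom_pow_span.smult[OF smult.IH, of c] show ?case by (simp add: algebra_simps)
qed

lemma binomial_transform_binom_pow_nat:
  "(\<Sum>l\<le>n. (n choose l) * ((l choose j) * i ^ (l - j))) = (n choose j) * Suc i ^ (n - j)"
proof (cases "j \<le> n")
  case False
  then show ?thesis by (simp add: binomial_eq_0)
next
  case True
  have "(\<Sum>l\<le>n. (n choose l) * ((l choose j) * i ^ (l - j))) =
        (\<Sum>l\<in>{j..n}. (n choose l) * ((l choose j) * i ^ (l - j)))"
    by (rule sum.mono_neutral_right) auto
  also have "\<dots> = (\<Sum>l\<in>{j..n}. (n choose j) * (((n - j) choose (l - j)) * i ^ (l - j)))"
    by (rule sum.cong) (auto simp: choose_mult mult.assoc[symmetric])
  also have "\<dots> = (\<Sum>u\<in>{0..n-j}. (n choose j) * (((n - j) choose u) * i ^ u))"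
    using sum.shift_bounds_cl_nat_ivl[where g="\<lambda>l. (n choose j) * (((n - j) choose (l - j)) * i ^ (l - j))" and m=0 and k=j and n="n-j"]
    using True by simp
  also have "\<dots> = (n choose j) * (i + 1) ^ (n - j)"
    using binomial_ring[of i 1 "n - j"] by (simp add: sum_distrib_left atMost_atLeast0)
  finally show ?thesis by simp
qed

lemma binom_pow_span_binomial_transform:
  "a \<in> binom_pow_span \<Longrightarrow> (\<lambda>n. \<Sum>l\<le>n. of_nat (n choose l) * a l) \<in> binom_pow_span"
proof (induction rule: binom_pow_span.induct)
  case (binom_pow i j)
  show ?case
  proof (rule binom_pow_span_cong[OF binom_pow_span.binom_pow[of "Suc i" j]])
    fix n
    have "(\<Sum>l\<le>n. of_nat (n choose l) * binom_pow i j l) =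
          (of_nat (\<Sum>l\<le>n. (n choose l) * ((l choose j) * i ^ (l - j))) :: rat)"
      by (simp add: binom_pow_def)
    also have "\<dots> = binom_pow (Suc i) j n"
      by (simp only: binomial_transform_binom_pow_nat) (simp add: binom_pow_def)
    finally show "binom_pow (Suc i) j n = (\<Sum>l\<le>n. of_nat (n choose l) * binom_pow i j l)" by simp
  qed
next
  case (add a b)
  from binom_pow_span.add[OF add.IH] show ?case by (simp add: algebra_simps sum.distrib)
next
  case (smult a c)
  from binom_pow_span.smult[OF smult.IH, of c] show ?case by (simp add: algebra_simps sum_distrib_left)
qed

lemma binom_pow_span_binomial_convolution:
  assumes "a \<in> binom_pow_span"
  shows "(\<lambda>n. \<Sum>l\<le>n. of_nat (n choose l) * a (n - l)) \<in> binom_pow_span"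
  using binom_pow_span_binomial_transform[OF assms]
proof (rule binom_pow_span_cong)
  fix n
  have "(\<Sum>l\<le>n. of_nat (n choose l) * a (n - l)) = (\<Sum>l\<le>n. of_nat (n choose (n - l)) * a (n - l))"
    by (rule sum.cong) (simp_all flip: binomial_symmetric)
  also have "\<dots> = (\<Sum>l\<le>n. of_nat (n choose l) * a l)"
    using sum.atLeastAtMost_rev[of "\<lambda>l. of_nat (n choose l) * a l" 0 n] by (simp add: atMost_atLeast0)
  finally show "(\<Sum>l\<le>n. of_nat (n choose l) * a l) = (\<Sum>l\<le>n. of_nat (n choose l) * a (n - l))" by simp
qed

lemma binom_pow_span_binomial_convolution_stable:
  assumes span: "\<And>l. a l \<in> binom_pow_span" and stable: "\<And>l. L \<le> l \<Longrightarrow> a l = a L"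
  shows "(\<lambda>n. \<Sum>l\<le>n. of_nat (n choose l) * a l (n - l)) \<in> binom_pow_span"
proof -
  define d where "d n l = of_nat (n choose l) * (a l (n - l) - a L (n - l))" for n l
  have d_zero: "d n l = 0" if "L \<le> l \<or> n < l" for n l
    using that stable[of l] by (auto simp: d_def binomial_eq_0)
  have "(\<Sum>l\<le>n. of_nat (n choose l) * a l (n - l)) =
        (\<Sum>l<L. d n l) + (\<Sum>l\<le>n. of_nat (n choose l) * a L (n - l))" for n
  proof -
    have "(\<Sum>l\<le>n. d n l) = (\<Sum>l\<in>{..n} \<union> {..<L}. d n l)"
      by (rule sum.mono_neutral_left) (use d_zero in auto)
    also have "\<dots> = (\<Sum>l<L. d n l)"
      by (rule sum.mono_neutral_right) (use d_zero in auto)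
    finally have "(\<Sum>l\<le>n. d n l) = (\<Sum>l<L. d n l)" .
    moreover have "(\<Sum>l\<le>n. of_nat (n choose l) * a l (n - l)) =
        (\<Sum>l\<le>n. d n l) + (\<Sum>l\<le>n. of_nat (n choose l) * a L (n - l))"
      unfolding sum.distrib[symmetric] by (rule sum.cong) (simp_all add: d_def right_diff_distrib)
    ultimately show ?thesis by simp
  qed
  moreover have "(\<lambda>n. (\<Sum>l<L. d n l) + (\<Sum>l\<le>n. of_nat (n choose l) * a L (n - l))) \<in> binom_pow_span"
    unfolding d_def using span
    by (intro binom_pow_span.add binom_pow_span_sum binom_pow_span_shift binom_pow_span_diff
        binom_pow_span_binomial_convolution) auto
  ultimately show ?thesis by simp
qed

definition eventually_exp_poly :: "(nat \<Rightarrow> rat) \<Rightarrow> bool" where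
  "eventually_exp_poly a \<longleftrightarrow> (\<exists>(k::nat) (p::nat \<Rightarrow> rat poly) N. \<forall>n\<ge>N.
      a n = (\<Sum>i=1..k. poly (p i) (of_nat n) * of_nat i ^ n))"

lemma poly_binomial_exists: "\<exists>q::rat poly. \<forall>n. poly q (of_nat n) = of_nat (n choose j)"
proof -
  define q where "q = smult (1 / fact j) (\<Prod>l<j. [:- of_nat l, 1:] :: rat poly)"
  have "poly q (of_nat n) = of_nat (n choose j)" for n
  proof -
    have "(of_nat (n choose j) :: rat) = (of_nat n gchoose j)" by (rule binomial_gbinomial)
    also have "\<dots> = (\<Prod>i=0..<j. of_nat n - of_nat i) / fact j" by (simp add: gbinomial_prod_rev)
    also have "\<dots> = poly q (of_nat n)" by (simp add: q_def poly_prod lessThan_atLeast0)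
    finally show ?thesis by simp
  qed
  then show ?thesis by blast
qed

lemma eventually_exp_poly_binom_pow: "eventually_exp_poly (binom_pow i j)"
proof (cases "i = 0")
  case True
  have "\<forall>n\<ge>Suc j. binom_pow i j n = (\<Sum>i=1..0. poly (0::rat poly) (of_nat n) * of_nat i ^ n)"
    using True by (auto simp: binom_pow_def)
  then show ?thesis unfolding eventually_exp_poly_def by (intro exI[of _ 0] exI[of _ "\<lambda>_. 0"] exI[of _ "Suc j"]) simp
next
  case False
  obtain q :: "rat poly" where q: "\<And>n. poly q (of_nat n) = of_nat (n choose j)"
    using poly_binomial_exists by blast
  define p where "p = (\<lambda>i'. if i' = i then smult (1 / of_nat i ^ j) q else 0)"
  have "binom_pow i j n = (\<Sum>i'=1..i. poly (p i') (of_nat n) * of_nat i' ^ n)" if "n \<ge> j" for n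
  proof -
    have "(\<Sum>i'=1..i. poly (p i') (of_nat n) * of_nat i' ^ n) =
          (\<Sum>i'=1..i. if i' = i then poly (smult (1 / of_nat i ^ j) q) (of_nat n) * of_nat i ^ n else 0)"
      by (rule sum.cong) (auto simp: p_def)
    also have "\<dots> = poly (smult (1 / of_nat i ^ j) q) (of_nat n) * of_nat i ^ n"
      using False by (simp add: sum.delta')
    also have "\<dots> = of_nat (n choose j) * (of_nat i ^ n / of_nat i ^ j)"
      by (simp add: q)
    also have "of_nat i ^ n / of_nat i ^ j = (of_nat i ^ (n - j) :: rat)"
      using False that by (simp add: power_diff)
    finally show ?thesis by (simp add: binom_pow_def)
  qed
  then show ?thesis unfolding eventually_exp_poly_def by (intro exI[of _ i] exI[of _ p] exI[of _ j]) simp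
qed

lemma sum_if_le_nat:
  assumes "k1 \<le> (k::nat)"
  shows "(\<Sum>i=1..k. (if i \<le> k1 then f i else 0)) = (\<Sum>i=1..k1. (f i :: 'a::comm_monoid_add))"
  using assms by (intro sum.mono_neutral_cong_right) auto

lemma eventually_exp_poly_add:
  assumes "eventually_exp_poly a" "eventually_exp_poly b"
  shows "eventually_exp_poly (\<lambda>n. a n + b n)"
proof -
  obtain k1 p1 N1 k2 p2 N2 where
    a: "\<forall>n\<ge>N1. a n = (\<Sum>i=1..k1. poly (p1 i) (of_nat n) * of_nat i ^ n)" and
    b: "\<forall>n\<ge>N2. b n = (\<Sum>i=1..k2. poly (p2 i) (of_nat n) * of_nat i ^ n)"
    using assms unfolding eventually_exp_poly_def by blast
  define p where "p = (\<lambda>i. (if i \<le> k1 then p1 i else 0) + (if i \<le> k2 then p2 i else 0))"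
  have "a n + b n = (\<Sum>i=1..k1+k2. poly (p i) (of_nat n) * of_nat i ^ n)" if "n \<ge> max N1 N2" for n
  proof -
    have "(\<Sum>i=1..k1+k2. poly (p i) (of_nat n) * of_nat i ^ n) =
          (\<Sum>i=1..k1+k2. (if i \<le> k1 then poly (p1 i) (of_nat n) * of_nat i ^ n else 0)) +
          (\<Sum>i=1..k1+k2. (if i \<le> k2 then poly (p2 i) (of_nat n) * of_nat i ^ n else 0))"
      by (simp add: sum.distrib[symmetric]) (rule sum.cong, auto simp: p_def algebra_simps)
    also have "\<dots> = (\<Sum>i=1..k1. poly (p1 i) (of_nat n) * of_nat i ^ n) + (\<Sum>i=1..k2. poly (p2 i) (of_nat n) * of_nat i ^ n)"
      using sum_if_le_nat[of k1 "k1+k2" "\<lambda>i. poly (p1 i) (of_nat n) * of_nat i ^ n"]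
        sum_if_le_nat[of k2 "k1+k2" "\<lambda>i. poly (p2 i) (of_nat n) * of_nat i ^ n"] by simp
    finally show ?thesis using a b that by simp
  qed
  then show ?thesis unfolding eventually_exp_poly_def by (intro exI[of _ "k1+k2"] exI[of _ p] exI[of _ "max N1 N2"]) simp
qed

lemma eventually_exp_poly_smult:
  assumes "eventually_exp_poly a"
  shows "eventually_exp_poly (\<lambda>n. c * a n)"
proof -
  obtain k p N where "\<forall>n\<ge>N. a n = (\<Sum>i=1..k. poly (p i) (of_nat n) * of_nat i ^ n)"
    using assms unfolding eventually_exp_poly_def by blast
  then have "\<forall>n\<ge>N. c * a n = (\<Sum>i=1..k. poly (smult c (p i)) (of_nat n) * of_nat i ^ n)"
    by (simp add: sum_distrib_left mult.assoc)
  then show ?thesis unfolding eventually_exp_poly_def by (intro exI[of _ k] exI[of _ "\<lambda>i. smult c (p i)"] exI[of _ N]) simp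
qed

lemma binom_pow_span_imp_eventually_exp_poly: "a \<in> binom_pow_span \<Longrightarrow> eventually_exp_poly a"
  by (induction rule: binom_pow_span.induct)
    (auto intro: eventually_exp_poly_binom_pow eventually_exp_poly_add eventually_exp_poly_smult)

section \<open>Eventual stability of antitone weights\<close>

definition thresh_le :: "nat \<Rightarrow> nat \<Rightarrow> (nat \<Rightarrow> nat) \<Rightarrow> (nat \<Rightarrow> nat) \<Rightarrow> bool" where
  "thresh_le t m s s' \<longleftrightarrow> (\<forall>c<m. s c = s' c \<or> (t \<le> s c \<and> s c \<le> s' c))"

definition thresh_antitone :: "nat \<Rightarrow> nat \<Rightarrow> ((nat \<Rightarrow> nat) \<Rightarrow> nat) \<Rightarrow> bool" where
  "thresh_antitone t m w \<longleftrightarrow> (\<forall>s s'. thresh_le t m s s' \<longrightarrow> w s' \<le> w s)"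

lemma subseq_const_or_mono_above:
  fixes y :: "nat \<Rightarrow> nat"
  shows "\<exists>\<tau>::nat \<Rightarrow> nat. strict_mono \<tau> \<and>
    (\<forall>i j. i \<le> j \<longrightarrow> y (\<tau> i) = y (\<tau> j) \<or> (t \<le> y (\<tau> i) \<and> y (\<tau> i) \<le> y (\<tau> j)))"
proof (cases "\<exists>v. infinite {i. y i = v}")
  case True
  then obtain v where inf: "infinite {i. y i = v}" by blast
  define \<tau> where "\<tau> = enumerate {i. y i = v}"
  have "strict_mono \<tau>" unfolding \<tau>_def by (rule strict_mono_enumerate[OF inf])
  moreover have "y (\<tau> i) = v" for i unfolding \<tau>_def using enumerate_in_set[OF inf, of i] by simp
  ultimately show ?thesis by (intro exI[where x=\<tau>]) auto
next
  case False
  have "\<exists>j>a. B \<le> y j" for a B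
  proof -
    have "{i. y i < B} = (\<Union>v<B. {i. y i = v})" by auto
    then have "finite {i. y i < B}" using False by simp
    then have "infinite (UNIV - {i. y i < B})" by (simp add: Diff_infinite_finite)
    then obtain j where "j > a" "j \<in> UNIV - {i. y i < B}"
      unfolding infinite_nat_iff_unbounded by blast
    then show ?thesis by auto
  qed
  then have "\<forall>a. \<exists>j. a < j \<and> max t (y a) \<le> y j" by blast
  then obtain f where f: "\<And>a. a < f a \<and> max t (y a) \<le> y (f a)" by metis
  define \<tau> where "\<tau> i = (f ^^ Suc i) 0" for i
  have \<tau>_Suc: "\<tau> (Suc i) = f (\<tau> i)" for i by (simp add: \<tau>_def)
  have "strict_mono \<tau>" unfolding strict_mono_Suc_iff \<tau>_Suc using f by blast
  moreover have "t \<le> y (\<tau> i)" for i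
    by (cases i) (use f in \<open>auto simp: \<tau>_def\<close>)
  moreover have "y (\<tau> i) \<le> y (\<tau> j)" if "i \<le> j" for i j
    using lift_Suc_mono_le[of "\<lambda>i. y (\<tau> i)", OF _ that] f \<tau>_Suc by (metis max.bounded_iff)
  ultimately show ?thesis by blast
qed

(* Dickson's lemma for the quasi-order thresh_le *)
lemma subseq_thresh_le_chain:
  fixes x :: "nat \<Rightarrow> nat \<Rightarrow> nat"
  shows "\<exists>\<sigma>::nat \<Rightarrow> nat. strict_mono \<sigma> \<and> (\<forall>i j. i \<le> j \<longrightarrow> thresh_le t m (x (\<sigma> i)) (x (\<sigma> j)))"
proof (induction m)
  case 0
  show ?case by (intro exI[where x=id]) (auto simp: thresh_le_def strict_mono_def)
next
  case (Suc m)
  then obtain \<sigma> :: "nat \<Rightarrow> nat" where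
    \<sigma>: "strict_mono \<sigma>" "\<And>i j. i \<le> j \<Longrightarrow> thresh_le t m (x (\<sigma> i)) (x (\<sigma> j))"
    by blast
  obtain \<tau> :: "nat \<Rightarrow> nat" where \<tau>: "strict_mono \<tau>"
    "\<And>i j. i \<le> j \<Longrightarrow> x (\<sigma> (\<tau> i)) m = x (\<sigma> (\<tau> j)) m \<or>
                      (t \<le> x (\<sigma> (\<tau> i)) m \<and> x (\<sigma> (\<tau> i)) m \<le> x (\<sigma> (\<tau> j)) m)"
    using subseq_const_or_mono_above[of "\<lambda>i. x (\<sigma> i) m" t] by blast
  have "strict_mono (\<sigma> \<circ> \<tau>)" using \<sigma>(1) \<tau>(1) by (simp add: strict_mono_def)
  moreover have "thresh_le t (Suc m) (x ((\<sigma> \<circ> \<tau>) i)) (x ((\<sigma> \<circ> \<tau>) j))" if "i \<le> j" for i j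
  proof -
    have "\<tau> i \<le> \<tau> j" using \<tau>(1) that by (simp add: strict_mono_less_eq)
    then have "thresh_le t m (x (\<sigma> (\<tau> i))) (x (\<sigma> (\<tau> j)))" by (rule \<sigma>(2))
    then show ?thesis using \<tau>(2)[OF that] unfolding thresh_le_def by (auto simp: less_Suc_eq)
  qed
  ultimately show ?case by blast
qed

lemma thresh_le_fun_upd:
  assumes "thresh_le t m s s'" "l = l' \<or> (t \<le> l \<and> l \<le> l')"
  shows "thresh_le t (Suc m) (s(m := l)) (s'(m := l'))"
  using assms unfolding thresh_le_def by (auto simp: less_Suc_eq)

lemma thresh_antitone_fun_upd:
  "thresh_antitone t (Suc m) w \<Longrightarrow> thresh_antitone t m (\<lambda>s. w (s(m := l)))"
  unfolding thresh_antitone_def using thresh_le_fun_upd by blast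

lemma thresh_antitone_no_descent:
  fixes x y :: "nat \<Rightarrow> nat \<Rightarrow> nat"
  assumes anti: "thresh_antitone t m w"
    and below: "\<And>i j. i < j \<Longrightarrow> thresh_le t m (x i) (x j) \<Longrightarrow> thresh_le t m (y i) (x j)"
    and descent: "\<And>i. w (y i) < w (x i)"
  shows False
proof -
  obtain \<sigma> :: "nat \<Rightarrow> nat" where
    \<sigma>: "strict_mono \<sigma>" "\<And>i j. i \<le> j \<Longrightarrow> thresh_le t m (x (\<sigma> i)) (x (\<sigma> j))"
    using subseq_thresh_le_chain by blast
  have "w (x (\<sigma> (Suc i))) < w (x (\<sigma> i))" for i
  proof -
    have "thresh_le t m (y (\<sigma> i)) (x (\<sigma> (Suc i)))"
      using below[OF strict_monoD[OF \<sigma>(1) lessI] \<sigma>(2)] by simp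
    then have "w (x (\<sigma> (Suc i))) \<le> w (y (\<sigma> i))" using anti unfolding thresh_antitone_def by blast
    then show ?thesis using descent[of "\<sigma> i"] by simp
  qed
  then show False using wf_no_infinite_down_chainE[OF wf_less, of "\<lambda>i. w (x (\<sigma> i))"] by auto
qed

lemma thresh_antitone_stabilizes:
  assumes anti: "thresh_antitone t (Suc m) w"
  shows "\<exists>L. \<forall>l\<ge>L. \<forall>s. w (s(m := l)) = w (s(m := L))"
proof (rule ccontr)
  assume unstable: "\<not> ?thesis"
  have "\<exists>l s. L < l \<and> w (s(m := l)) < w (s(m := L))" if "t \<le> L" for L
  proof -
    obtain l s where ls: "l \<ge> L" "w (s(m := l)) \<noteq> w (s(m := L))" using unstable by blast
    have "thresh_le t (Suc m) (s(m := L)) (s(m := l))"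
      by (rule thresh_le_fun_upd) (use ls that in \<open>auto simp: thresh_le_def\<close>)
    then have "w (s(m := l)) \<le> w (s(m := L))" using anti unfolding thresh_antitone_def by blast
    moreover have "l \<noteq> L" using ls(2) by auto
    ultimately show ?thesis using ls by (intro exI[of _ l] exI[of _ s]) auto
  qed
  then obtain nxt s where step:
    "\<And>L. t \<le> L \<Longrightarrow> L < nxt L \<and> w ((s L)(m := nxt L)) < w ((s L)(m := L))"
    by metis
  define Ls where "Ls i = (nxt ^^ i) t" for i
  have Ls_Suc: "Ls (Suc i) = nxt (Ls i)" for i by (simp add: Ls_def)
  have Ls_ge: "t \<le> Ls i" for i
    by (induction i) (use step Ls_Suc in \<open>auto simp: Ls_def intro: less_imp_le order_trans\<close>)
  have "strict_mono Ls" unfolding strict_mono_Suc_iff using step[OF Ls_ge] Ls_Suc by simp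
  show False
  proof (rule thresh_antitone_no_descent[OF anti, where x="\<lambda>i. (s (Ls i))(m := Ls i)"
        and y="\<lambda>i. (s (Ls i))(m := Ls (Suc i))"])
    fix i j :: nat
    assume "i < j" and le: "thresh_le t (Suc m) ((s (Ls i))(m := Ls i)) ((s (Ls j))(m := Ls j))"
    have "Ls (Suc i) \<le> Ls j" using \<open>strict_mono Ls\<close> \<open>i < j\<close> by (simp add: strict_mono_less_eq)
    then show "thresh_le t (Suc m) ((s (Ls i))(m := Ls (Suc i))) ((s (Ls j))(m := Ls j))"
      using le Ls_ge[of "Suc i"] unfolding thresh_le_def by (auto simp: less_Suc_eq)
  next
    fix i show "w ((s (Ls i))(m := Ls (Suc i))) < w ((s (Ls i))(m := Ls i))"
      using step[OF Ls_ge] Ls_Suc by simp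
  qed
qed

section \<open>Weighted sums over colourings\<close>

definition class_sizes :: "nat set \<Rightarrow> (nat \<Rightarrow> nat) \<Rightarrow> nat \<Rightarrow> nat" where
  "class_sizes X \<phi> = (\<lambda>c. card {x\<in>X. \<phi> x = c})"

definition colouring_sum :: "nat set \<Rightarrow> nat \<Rightarrow> ((nat \<Rightarrow> nat) \<Rightarrow> nat) \<Rightarrow> rat" where
  "colouring_sum X m w = (\<Sum>\<phi>\<in>X \<rightarrow>\<^sub>E {..<m}. of_nat (w (class_sizes X \<phi>)))"

definition colouring_seq :: "nat \<Rightarrow> ((nat \<Rightarrow> nat) \<Rightarrow> nat) \<Rightarrow> nat \<Rightarrow> rat" where
  "colouring_seq m w n = colouring_sum {..<n} m w"

lemma class_sizes_bij_betw:
  assumes "bij_betw \<pi> X Y"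
  shows "class_sizes Y (\<lambda>y. \<phi> (inv_into X \<pi> y)) = class_sizes X \<phi>"
proof
  fix c
  have "{y\<in>Y. \<phi> (inv_into X \<pi> y) = c} = \<pi> ` {x\<in>X. \<phi> x = c}"
    using assms by (force simp: bij_betw_def f_inv_into_f inv_into_into)
  moreover have "inj_on \<pi> {x\<in>X. \<phi> x = c}"
    using assms by (auto simp: bij_betw_def intro: inj_on_subset)
  ultimately show "class_sizes Y (\<lambda>y. \<phi> (inv_into X \<pi> y)) c = class_sizes X \<phi> c"
    by (simp add: class_sizes_def card_image)
qed

lemma colouring_sum_bij_betw:
  assumes "bij_betw \<pi> X Y"
  shows "colouring_sum X m w = colouring_sum Y m w"
  unfolding colouring_sum_def
proof (rule sum.reindex_bij_witness[where j="\<lambda>\<phi>. restrict (\<lambda>y. \<phi> (inv_into X \<pi> y)) Y"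
      and i="\<lambda>\<psi>. restrict (\<lambda>x. \<psi> (\<pi> x)) X"])
  fix \<phi> assume \<phi>: "\<phi> \<in> X \<rightarrow>\<^sub>E {..<m}"
  show "restrict (\<lambda>x. restrict (\<lambda>y. \<phi> (inv_into X \<pi> y)) Y (\<pi> x)) X = \<phi>"
    using assms \<phi> by (auto simp: bij_betw_def PiE_def extensional_def)
  show "restrict (\<lambda>y. \<phi> (inv_into X \<pi> y)) Y \<in> Y \<rightarrow>\<^sub>E {..<m}"
    using \<phi> bij_betw_inv_into[OF assms] by (auto simp: bij_betw_def PiE_def Pi_def)
  have "class_sizes Y (restrict (\<lambda>y. \<phi> (inv_into X \<pi> y)) Y) = class_sizes Y (\<lambda>y. \<phi> (inv_into X \<pi> y))"
    unfolding class_sizes_def by (rule ext) (rule arg_cong[where f=card], auto)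
  then show "of_nat (w (class_sizes Y (restrict (\<lambda>y. \<phi> (inv_into X \<pi> y)) Y))) =
      (of_nat (w (class_sizes X \<phi>)) :: rat)"
    using class_sizes_bij_betw[OF assms] by simp
next
  fix \<psi> assume \<psi>: "\<psi> \<in> Y \<rightarrow>\<^sub>E {..<m}"
  show "restrict (\<lambda>y. restrict (\<lambda>x. \<psi> (\<pi> x)) X (inv_into X \<pi> y)) Y = \<psi>"
    using assms \<psi> by (auto simp: bij_betw_def PiE_def extensional_def f_inv_into_f inv_into_into)
  show "restrict (\<lambda>x. \<psi> (\<pi> x)) X \<in> X \<rightarrow>\<^sub>E {..<m}"
    using \<psi> assms by (auto simp: bij_betw_def PiE_def Pi_def)
qed

lemma colouring_sum_eq_colouring_seq: "finite X \<Longrightarrow> colouring_sum X m w = colouring_seq m w (card X)"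
  using ex_bij_betw_finite_nat[of X] colouring_sum_bij_betw
  by (fastforce simp: colouring_seq_def atLeast0LessThan)

lemma colouring_seq_0: "colouring_seq 0 w n = of_nat (w (\<lambda>_. 0)) * (if n = 0 then 1 else 0)"
proof (cases "n = 0")
  case True
  then show ?thesis by (simp add: colouring_seq_def colouring_sum_def class_sizes_def)
next
  case False
  then have "{..<n} \<rightarrow>\<^sub>E {..<0::nat} = {}" by (intro PiE_empty_range[of 0]) auto
  then show ?thesis using False by (simp add: colouring_seq_def colouring_sum_def)
qed

lemma class_sizes_extend:
  assumes "\<psi> \<in> (X - A) \<rightarrow>\<^sub>E {..<m}" "A \<subseteq> X"
  shows "class_sizes X (\<lambda>x. if x \<in> A then m else \<psi> x) = (class_sizes (X - A) \<psi>)(m := card A)"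
proof
  fix c
  show "class_sizes X (\<lambda>x. if x \<in> A then m else \<psi> x) c = ((class_sizes (X - A) \<psi>)(m := card A)) c"
  proof (cases "c = m")
    case True
    then have "{x\<in>X. (if x \<in> A then m else \<psi> x) = c} = A" using assms by (auto simp: PiE_def Pi_def)
    then show ?thesis using True by (simp add: class_sizes_def)
  next
    case False
    then have "{x\<in>X. (if x \<in> A then m else \<psi> x) = c} = {x\<in>X - A. \<psi> x = c}" by auto
    then show ?thesis using False by (simp add: class_sizes_def)
  qed
qed

lemma colouring_sum_Suc:
  assumes "finite X"
  shows "colouring_sum X (Suc m) w = (\<Sum>A\<in>Pow X. colouring_sum (X - A) m (\<lambda>s. w (s(m := card A))))"
proof -
  have "(\<Sum>A\<in>Pow X. colouring_sum (X - A) m (\<lambda>s. w (s(m := card A)))) =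
        (\<Sum>(A, \<psi>)\<in>Sigma (Pow X) (\<lambda>A. (X - A) \<rightarrow>\<^sub>E {..<m}). of_nat (w ((class_sizes (X - A) \<psi>)(m := card A))))"
    unfolding colouring_sum_def using assms by (intro sum.Sigma) (auto intro!: finite_PiE)
  also have "\<dots> = (\<Sum>\<phi>\<in>X \<rightarrow>\<^sub>E {..<Suc m}. of_nat (w (class_sizes X \<phi>)))"
  proof (rule sum.reindex_bij_witness[where j="\<lambda>(A, \<psi>). (\<lambda>x. if x \<in> A then m else \<psi> x)"
        and i="\<lambda>\<phi>. ({x\<in>X. \<phi> x = m}, restrict \<phi> (X - {x\<in>X. \<phi> x = m}))"])
    fix a assume "a \<in> Sigma (Pow X) (\<lambda>A. (X - A) \<rightarrow>\<^sub>E {..<m})"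
    then obtain A \<psi> where a: "a = (A, \<psi>)" "A \<subseteq> X" "\<psi> \<in> (X - A) \<rightarrow>\<^sub>E {..<m}" by auto
    then have "{x\<in>X. (if x \<in> A then m else \<psi> x) = m} = A" by (auto simp: PiE_def Pi_def)
    then show "(case case a of (A, \<psi>) \<Rightarrow> \<lambda>x. if x \<in> A then m else \<psi> x of
          \<phi> \<Rightarrow> ({x \<in> X. \<phi> x = m}, restrict \<phi> (X - {x \<in> X. \<phi> x = m}))) = a"
      using a by (auto simp: PiE_def extensional_def)
    show "(case a of (A, \<psi>) \<Rightarrow> \<lambda>x. if x \<in> A then m else \<psi> x) \<in> X \<rightarrow>\<^sub>E {..<Suc m}"
      using a by (auto simp: PiE_def Pi_def extensional_def)
    show "of_nat (w (class_sizes X (case a of (A, \<psi>) \<Rightarrow> \<lambda>x. if x \<in> A then m else \<psi> x))) =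
         (case a of (A, \<psi>) \<Rightarrow> (of_nat (w ((class_sizes (X - A) \<psi>)(m := card A))) :: rat))"
      using a by (simp add: class_sizes_extend)
  next
    fix \<phi> assume \<phi>: "\<phi> \<in> X \<rightarrow>\<^sub>E {..<Suc m}"
    show "(case ({x \<in> X. \<phi> x = m}, restrict \<phi> (X - {x \<in> X. \<phi> x = m})) of
          (A, \<psi>) \<Rightarrow> \<lambda>x. if x \<in> A then m else \<psi> x) = \<phi>"
      using \<phi> by (auto simp: PiE_def extensional_def)
    show "({x \<in> X. \<phi> x = m}, restrict \<phi> (X - {x \<in> X. \<phi> x = m})) \<in> Sigma (Pow X) (\<lambda>A. (X - A) \<rightarrow>\<^sub>E {..<m})"
      using \<phi> by (auto simp: PiE_def Pi_def less_Suc_eq)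
  qed
  finally show ?thesis unfolding colouring_sum_def by simp
qed

lemma sum_Pow_card:
  assumes "finite X"
  shows "(\<Sum>A\<in>Pow X. f (card A)) = (\<Sum>l\<le>card X. of_nat (card X choose l) * (f l :: 'a::comm_semiring_1))"
proof -
  have "(\<Sum>A\<in>Pow X. f (card A)) = (\<Sum>l\<le>card X. \<Sum>A\<in>{A\<in>Pow X. card A = l}. f (card A))"
    using assms by (intro sum.group[symmetric]) (auto intro: card_mono)
  also have "\<dots> = (\<Sum>l\<le>card X. of_nat (card X choose l) * f l)"
  proof (rule sum.cong[OF refl])
    fix l
    have "{A\<in>Pow X. card A = l} = {B. B \<subseteq> X \<and> card B = l}" by auto
    then show "(\<Sum>A\<in>{A\<in>Pow X. card A = l}. f (card A)) = of_nat (card X choose l) * f l"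
      using n_subsets[OF assms, of l] by simp
  qed
  finally show ?thesis .
qed

lemma colouring_seq_Suc:
  "colouring_seq (Suc m) w n = (\<Sum>l\<le>n. of_nat (n choose l) * colouring_seq m (\<lambda>s. w (s(m := l))) (n - l))"
proof -
  have "colouring_seq (Suc m) w n =
        (\<Sum>A\<in>Pow {..<n}. colouring_sum ({..<n} - A) m (\<lambda>s. w (s(m := card A))))"
    unfolding colouring_seq_def by (rule colouring_sum_Suc) simp
  also have "\<dots> = (\<Sum>A\<in>Pow {..<n}. colouring_seq m (\<lambda>s. w (s(m := card A))) (n - card A))"
    by (rule sum.cong[OF refl])
      (auto simp: colouring_sum_eq_colouring_seq card_Diff_subset finite_subset)
  also have "\<dots> = (\<Sum>l\<le>n. of_nat (n choose l) * colouring_seq m (\<lambda>s. w (s(m := l))) (n - l))"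
    using sum_Pow_card[of "{..<n}" "\<lambda>l. colouring_seq m (\<lambda>s. w (s(m := l))) (n - l)"] by simp
  finally show ?thesis .
qed

lemma colouring_seq_in_binom_pow_span:
  "thresh_antitone t m w \<Longrightarrow> colouring_seq m w \<in> binom_pow_span"
proof (induction m arbitrary: w)
  case 0
  have "(\<lambda>n. of_nat (w (\<lambda>_. 0)) * (if n = 0 then 1 else 0)) \<in> binom_pow_span"
    by (intro binom_pow_span.smult binom_pow_span_indicator)
  then show ?case by (simp add: colouring_seq_0)
next
  case (Suc m)
  obtain L where L: "\<And>l s. L \<le> l \<Longrightarrow> w (s(m := l)) = w (s(m := L))"
    using thresh_antitone_stabilizes[OF Suc.prems] by blast
  have "(\<lambda>n. \<Sum>l\<le>n. of_nat (n choose l) * colouring_seq m (\<lambda>s. w (s(m := l))) (n - l)) \<in> binom_pow_span"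
  proof (rule binom_pow_span_binomial_convolution_stable)
    show "colouring_seq m (\<lambda>s. w (s(m := l))) \<in> binom_pow_span" for l
      by (rule Suc.IH, rule thresh_antitone_fun_upd, rule Suc.prems)
    show "colouring_seq m (\<lambda>s. w (s(m := l))) = colouring_seq m (\<lambda>s. w (s(m := L)))" if "L \<le> l" for l
      using L[OF that] by simp
  qed
  then show ?case by (simp add: colouring_seq_Suc)
qed

section \<open>Isomorphisms and the swap relation\<close>

lemma transp_map_simps [simp]:
  "transp_map a b a = b" "transp_map a b b = a"
  "x \<noteq> a \<Longrightarrow> x \<noteq> b \<Longrightarrow> transp_map a b x = x"
  by (auto simp: transp_map_def)

lemma transp_map_self: "transp_map a a = (\<lambda>x. x)"
  by (auto simp: transp_map_def)

lemma transp_map_commute: "transp_map a b = transp_map b a"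
  by (auto simp: transp_map_def)

lemma transp_map_disjoint_comm:
  assumes "x \<noteq> a" "x \<noteq> b" "y \<noteq> a" "y \<noteq> b"
  shows "transp_map x y (transp_map a b z) = transp_map a b (transp_map x y z)"
  using assms by (auto simp: transp_map_def)

lemma transp_map_in: "a \<in> X \<Longrightarrow> b \<in> X \<Longrightarrow> z \<in> X \<Longrightarrow> transp_map a b z \<in> X"
  by (auto simp: transp_map_def)

lemma bij_betw_transp_map: "a \<in> X \<Longrightarrow> b \<in> X \<Longrightarrow> bij_betw (transp_map a b) X X"
  by (rule bij_betwI[where g="transp_map a b"]) (auto simp: transp_map_def)

lemma transp_map_image:
  assumes "x \<in> S" "y \<notin> S"
  shows "transp_map x y ` S = insert y (S - {x})"
  using assms by (auto simp: transp_map_def image_iff)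

lemma is_iso_relD:
  "is_iso R ar C f A B \<Longrightarrow> r \<in> R \<Longrightarrow> length xs = ar r \<Longrightarrow> set xs \<subseteq> carrier A \<Longrightarrow>
    rel B r (map f xs) = rel A r xs"
  unfolding is_iso_def by blast

lemma is_iso_id: "is_iso R ar C (\<lambda>x. x) M M"
  unfolding is_iso_def by (auto simp: bij_betw_def inj_on_def)

lemma is_iso_comp:
  assumes f: "is_iso R ar C f A B" and g: "is_iso R ar C g B D"
  shows "is_iso R ar C (g \<circ> f) A D"
  unfolding is_iso_def
proof (intro conjI ballI allI impI)
  show "bij_betw (g \<circ> f) (carrier A) (carrier D)"
    using assms unfolding is_iso_def by (auto intro: bij_betw_trans)
next
  fix r xs assume r: "r \<in> R" and xs: "length xs = ar r \<and> set xs \<subseteq> carrier A"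
  have "set (map f xs) \<subseteq> carrier B" using f xs unfolding is_iso_def bij_betw_def by auto
  then show "rel D r (map (g \<circ> f) xs) = rel A r xs"
    using is_iso_relD[OF g r, of "map f xs"] is_iso_relD[OF f r, of xs] xs by simp
next
  fix c assume "c \<in> C"
  then show "cst D c = (g \<circ> f) (cst A c)" using assms unfolding is_iso_def by simp
qed

lemma is_iso_cong:
  assumes "wf_struc R ar C A" "is_iso R ar C f A B" "\<And>x. x \<in> carrier A \<Longrightarrow> f x = g x"
  shows "is_iso R ar C g A B"
  unfolding is_iso_def
proof (intro conjI ballI allI impI)
  show "bij_betw g (carrier A) (carrier B)"
    using assms(2,3) unfolding is_iso_def using bij_betw_cong by blast
next
  fix r xs assume r: "r \<in> R" and xs: "length xs = ar r \<and> set xs \<subseteq> carrier A"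
  have "map g xs = map f xs" using xs assms(3) by (auto intro: map_cong)
  then show "rel B r (map g xs) = rel A r xs" using is_iso_relD[OF assms(2) r, of xs] xs by metis
next
  fix c assume "c \<in> C"
  then show "cst B c = g (cst A c)" using assms unfolding is_iso_def wf_struc_def by auto
qed

lemma is_iso_inv_into:
  assumes wf: "wf_struc R ar C A" and f: "is_iso R ar C f A B"
  shows "is_iso R ar C (inv_into (carrier A) f) B A"
  unfolding is_iso_def
proof (intro conjI ballI allI impI)
  have bij: "bij_betw f (carrier A) (carrier B)" using f unfolding is_iso_def by simp
  then show "bij_betw (inv_into (carrier A) f) (carrier B) (carrier A)" by (rule bij_betw_inv_into)
  fix r xs assume r: "r \<in> R" and xs: "length xs = ar r \<and> set xs \<subseteq> carrier B"
  define ys where "ys = map (inv_into (carrier A) f) xs"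
  have ys: "length ys = ar r" "set ys \<subseteq> carrier A"
    using xs bij unfolding ys_def by (auto simp: bij_betw_def inv_into_into)
  have "map f ys = xs" using xs bij unfolding ys_def
    by (auto simp: bij_betw_def f_inv_into_f intro!: map_idI)
  then show "rel A r ys = rel B r xs" using is_iso_relD[OF f r ys] by simp
next
  fix c assume c: "c \<in> C"
  have "cst A c \<in> carrier A" using wf c unfolding wf_struc_def by auto
  then show "cst A c = inv_into (carrier A) f (cst B c)"
    using f c unfolding is_iso_def by (auto simp: bij_betw_def inv_into_f_f)
qed

lemma is_iso_same_map_eq:
  assumes "wf_struc R ar C M1" "wf_struc R ar C M2" "carrier M1 = carrier M2"
    "is_iso R ar C f M1 N" "is_iso R ar C f M2 N"
  shows "M1 = M2"
proof (rule struc.equality)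
  show "carrier M1 = carrier M2" by fact
  show "rel M1 = rel M2"
  proof (intro ext)
    fix r xs
    show "rel M1 r xs = rel M2 r xs"
    proof (cases "r \<in> R \<and> length xs = ar r \<and> set xs \<subseteq> carrier M1")
      case True
      then show ?thesis using assms(3-5) unfolding is_iso_def by metis
    next
      case False
      then show ?thesis using assms(1-3) unfolding wf_struc_def by metis
    qed
  qed
  show "cst M1 = cst M2"
  proof
    fix c show "cst M1 c = cst M2 c"
    proof (cases "c \<in> C")
      case True
      have "f (cst M1 c) = f (cst M2 c)" using assms(4,5) True unfolding is_iso_def by metis
      moreover have "inj_on f (carrier M1)" using assms(4) unfolding is_iso_def bij_betw_def by simp
      moreover have "cst M1 c \<in> carrier M1" "cst M2 c \<in> carrier M1"
        using assms(1-3) True unfolding wf_struc_def by auto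
      ultimately show ?thesis by (auto dest: inj_onD)
    next
      case False
      then show ?thesis using assms(1,2) unfolding wf_struc_def by simp
    qed
  qed
qed simp

lemma equiv_swap_equiv: "equiv (carrier M) (swap_equiv R ar C M)"
proof (rule equivI)
  show "refl_on (carrier M) (swap_equiv R ar C M)"
    unfolding refl_on_def swap_equiv_def by (auto simp: transp_map_self is_iso_id)
  show "sym (swap_equiv R ar C M)"
    unfolding sym_def swap_equiv_def using transp_map_commute by auto
  show "trans (swap_equiv R ar C M)"
  proof (rule transI)
    fix a b c assume ab: "(a, b) \<in> swap_equiv R ar C M" and bc: "(b, c) \<in> swap_equiv R ar C M"
    show "(a, c) \<in> swap_equiv R ar C M"
    proof (cases "a = b \<or> b = c \<or> a = c")
      case True
      then show ?thesis using ab bc unfolding swap_equiv_def by (auto simp: transp_map_self is_iso_id)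
    next
      case False
      have "is_iso R ar C (transp_map a b \<circ> (transp_map b c \<circ> transp_map a b)) M M"
        using ab bc unfolding swap_equiv_def by (blast intro: is_iso_comp)
      moreover have "transp_map a b \<circ> (transp_map b c \<circ> transp_map a b) = transp_map a c"
        using False by (auto simp: transp_map_def)
      ultimately show ?thesis using ab bc unfolding swap_equiv_def by simp
    qed
  qed
qed (auto simp: swap_equiv_def)

lemma swap_equiv_cst:
  "(a, b) \<in> swap_equiv R ar C M \<Longrightarrow> c \<in> C \<Longrightarrow> cst M c = a \<Longrightarrow> b = a"
  unfolding swap_equiv_def is_iso_def by auto

lemma swap_equiv_is_iso_image:
  assumes wA: "wf_struc R ar C A" and wB: "wf_struc R ar C B" and iso: "is_iso R ar C f A B"
    and ab: "(a, b) \<in> swap_equiv R ar C A"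
  shows "(f a, f b) \<in> swap_equiv R ar C B"
proof -
  let ?g = "inv_into (carrier A) f"
  have bij: "bij_betw f (carrier A) (carrier B)" using iso unfolding is_iso_def by simp
  have a: "a \<in> carrier A" and b: "b \<in> carrier A" and t: "is_iso R ar C (transp_map a b) A A"
    using ab unfolding swap_equiv_def by auto
  have "is_iso R ar C (f \<circ> (transp_map a b \<circ> ?g)) B B"
    by (intro is_iso_comp[OF _ iso] is_iso_comp[OF is_iso_inv_into[OF wA iso] t])
  moreover have "(f \<circ> (transp_map a b \<circ> ?g)) y = transp_map (f a) (f b) y" if "y \<in> carrier B" for y
  proof -
    obtain x where x: "x \<in> carrier A" "y = f x" using \<open>y \<in> carrier B\<close> bij by (auto simp: bij_betw_def)
    have "?g y = x" using x bij by (simp add: bij_betw_def inv_into_f_f)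
    moreover have "x \<noteq> a \<Longrightarrow> f x \<noteq> f a" "x \<noteq> b \<Longrightarrow> f x \<noteq> f b"
      using bij x a b by (auto simp: bij_betw_def dest: inj_onD)
    ultimately show ?thesis using x by (cases "x = a \<or> x = b") auto
  qed
  ultimately have "is_iso R ar C (transp_map (f a) (f b)) B B" by (rule is_iso_cong[OF wB])
  moreover have "f a \<in> carrier B" "f b \<in> carrier B" using a b bij by (auto simp: bij_betw_def)
  ultimately show ?thesis unfolding swap_equiv_def by simp
qed

lemma finite_wf_strucs:
  assumes "finite R" "finite C" "finite X"
  shows "finite {M. wf_struc R ar C M \<and> carrier M = X}"
proof -
  define A where "A = Max (insert 0 (ar ` R))"
  have arA: "r \<in> R \<Longrightarrow> ar r \<le> A" for r unfolding A_def using assms(1) by auto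
  define F where "F M = ({(r, xs). rel M r xs}, restrict (cst M) C)" for M :: "('a, 'b) struc"
  let ?S = "{M. wf_struc R ar C M \<and> carrier M = X}"
  have "F ` ?S \<subseteq> Pow (R \<times> {xs. set xs \<subseteq> X \<and> length xs \<le> A}) \<times> (C \<rightarrow>\<^sub>E X)"
    unfolding F_def wf_struc_def using arA by fastforce
  moreover have "finite (Pow (R \<times> {xs. set xs \<subseteq> X \<and> length xs \<le> A}) \<times> (C \<rightarrow>\<^sub>E X))"
    using assms by (intro finite_SigmaI finite_Pow_iff[THEN iffD2] finite_cartesian_product
        finite_lists_length_le finite_PiE) auto
  ultimately have "finite (F ` ?S)" by (rule finite_subset)
  moreover have "inj_on F ?S"
  proof (rule inj_onI)
    fix M1 M2 assume M1: "M1 \<in> ?S" and M2: "M2 \<in> ?S" and eq: "F M1 = F M2"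
    show "M1 = M2"
    proof (rule struc.equality)
      have "{(r, xs). rel M1 r xs} = {(r, xs). rel M2 r xs}" using eq unfolding F_def by simp
      then show "rel M1 = rel M2" by (intro ext) (metis (mono_tags, lifting) case_prodI mem_Collect_eq old.prod.case)
      have r: "restrict (cst M1) C = restrict (cst M2) C" using eq unfolding F_def by simp
      show "cst M1 = cst M2"
      proof
        fix c show "cst M1 c = cst M2 c"
          using M1 M2 r unfolding wf_struc_def by (cases "c \<in> C") (auto dest: fun_cong[where x=c])
      qed
    qed (use M1 M2 in simp_all)
  qed
  ultimately show ?thesis using finite_imageD by blast
qed

section \<open>Relabelling and induced substructures\<close>

definition colour_kernel :: "nat set \<Rightarrow> (nat \<Rightarrow> nat) \<Rightarrow> (nat \<times> nat) set" where
  "colour_kernel X \<phi> = {(x, y). x \<in> X \<and> y \<in> X \<and> \<phi> x = \<phi> y}"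

definition relabel :: "'c set \<Rightarrow> (nat \<Rightarrow> nat) \<Rightarrow> ('r, 'c) struc \<Rightarrow> ('r, 'c) struc" where
  "relabel C \<pi> M = \<lparr>carrier = \<pi> ` carrier M,
     rel = (\<lambda>r ys. set ys \<subseteq> \<pi> ` carrier M \<and> rel M r (map (inv_into (carrier M) \<pi>) ys)),
     cst = (\<lambda>c. if c \<in> C then \<pi> (cst M c) else 0)\<rparr>"

definition induced :: "nat set \<Rightarrow> ('r, 'c) struc \<Rightarrow> ('r, 'c) struc" where
  "induced X M = \<lparr>carrier = X, rel = (\<lambda>r xs. rel M r xs \<and> set xs \<subseteq> X), cst = cst M\<rparr>"

lemma wf_struc_relabel:
  "wf_struc R ar C M \<Longrightarrow> inj_on \<pi> (carrier M) \<Longrightarrow> wf_struc R ar C (relabel C \<pi> M)"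
  unfolding wf_struc_def relabel_def by (auto dest!: spec[of _ "map _ _"] dest: spec)

lemma is_iso_relabel:
  assumes "inj_on \<pi> (carrier M)"
  shows "is_iso R ar C \<pi> M (relabel C \<pi> M)"
  unfolding is_iso_def
proof (intro conjI ballI allI impI)
  show "bij_betw \<pi> (carrier M) (carrier (relabel C \<pi> M))"
    using assms by (simp add: relabel_def bij_betw_imageI)
  fix r xs assume "r \<in> R" and xs: "length xs = ar r \<and> set xs \<subseteq> carrier M"
  then have "map (inv_into (carrier M) \<pi>) (map \<pi> xs) = xs"
    using assms by (auto intro!: map_idI simp: inv_into_f_f)
  then show "rel (relabel C \<pi> M) r (map \<pi> xs) = rel M r xs"
    using xs by (auto simp: relabel_def)
qed (simp add: relabel_def)

lemma wf_struc_induced: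
  "wf_struc R ar C M \<Longrightarrow> X \<subseteq> carrier M \<Longrightarrow> \<forall>c\<in>C. cst M c \<in> X \<Longrightarrow> wf_struc R ar C (induced X M)"
  unfolding wf_struc_def induced_def by auto

lemma substruc_induced:
  "wf_struc R ar C M \<Longrightarrow> X \<subseteq> carrier M \<Longrightarrow> \<forall>c\<in>C. cst M c \<in> X \<Longrightarrow> substruc R ar C (induced X M) M"
  using wf_struc_induced unfolding substruc_def by (auto simp: induced_def)

lemma is_iso_transp_map_induced:
  assumes iso: "is_iso R ar C (transp_map a b) M M" and "a \<in> X" "b \<in> X" "X \<subseteq> carrier M"
  shows "is_iso R ar C (transp_map a b) (induced X M) (induced X M)"
  unfolding is_iso_def
proof (intro conjI ballI allI impI)
  show "bij_betw (transp_map a b) (carrier (induced X M)) (carrier (induced X M))"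
    using assms by (simp add: induced_def bij_betw_transp_map)
next
  fix r xs assume r: "r \<in> R" and xs: "length xs = ar r \<and> set xs \<subseteq> carrier (induced X M)"
  then have "set (map (transp_map a b) xs) \<subseteq> X" "set xs \<subseteq> carrier M"
    using assms by (auto simp: induced_def intro: transp_map_in)
  then show "rel (induced X M) r (map (transp_map a b) xs) = rel (induced X M) r xs"
    using is_iso_relD[OF iso r, of xs] xs by (auto simp: induced_def)
next
  fix c assume "c \<in> C"
  then show "cst (induced X M) c = transp_map a b (cst (induced X M) c)"
    using iso unfolding is_iso_def by (simp add: induced_def)
qed

(* An element x \<notin> X of the tuple is swapped with an element y \<in> X of its colour class that avoids the
   tuple and B; such y exists because the class has at least A + 2 elements in X. *)
lemma transport_tuple_induct:
  fixes P :: "nat list \<Rightarrow> bool"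
  assumes sub: "X \<subseteq> X'" and finB: "finite B" and cardB: "card B \<le> 2" and B: "B \<subseteq> X"
    and big: "\<And>x. x \<in> X' - X \<Longrightarrow> A + 2 \<le> card {y\<in>X. \<phi> y = \<phi> x}"
    and swap: "\<And>ys x y. set ys \<subseteq> X' \<Longrightarrow> length ys \<le> A \<Longrightarrow> x \<in> X' - X \<Longrightarrow> y \<in> X \<Longrightarrow> \<phi> x = \<phi> y
               \<Longrightarrow> x \<notin> B \<Longrightarrow> y \<notin> B \<Longrightarrow> y \<notin> set ys \<Longrightarrow> P (map (transp_map x y) ys) \<longleftrightarrow> P ys"
    and base: "\<And>ys. set ys \<subseteq> X \<Longrightarrow> length ys \<le> A \<Longrightarrow> P ys"
  shows "set xs \<subseteq> X' \<Longrightarrow> length xs \<le> A \<Longrightarrow> P xs"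
proof (induction "card (set xs - X)" arbitrary: xs rule: less_induct)
  case less
  show ?case
  proof (cases "set xs \<subseteq> X")
    case True
    then show ?thesis using base less.prems by blast
  next
    case False
    then obtain x where x: "x \<in> set xs" "x \<notin> X" by blast
    then have xX': "x \<in> X' - X" using less.prems by auto
    have "\<exists>y\<in>{y\<in>X. \<phi> y = \<phi> x}. y \<notin> (set xs - {x}) \<union> B"
    proof (rule ccontr)
      assume "\<not> ?thesis"
      then have "card {y\<in>X. \<phi> y = \<phi> x} \<le> card ((set xs - {x}) \<union> B)"
        using finB by (intro card_mono) auto
      also have "\<dots> \<le> card (set xs - {x}) + card B" by (rule card_Un_le)
      also have "card (set xs - {x}) < length xs"
        using x card_length[of xs] card_Diff1_less[of "set xs" x] by simp
      finally show False using big[OF xX'] cardB less.prems(2) by linarith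
    qed
    then obtain y where y: "y \<in> X" "\<phi> y = \<phi> x" "y \<notin> set xs" "y \<notin> B" using x(2) by fastforce
    have "x \<notin> B" using x B by auto
    define ys where "ys = map (transp_map x y) xs"
    have set_ys: "set ys = insert y (set xs - {x})"
      unfolding ys_def using transp_map_image[OF x(1) y(3)] by simp
    then have "card (set ys - X) < card (set xs - X)"
      using x y(1) by (auto intro!: psubset_card_mono)
    moreover have "set ys \<subseteq> X'" "length ys \<le> A" using set_ys less.prems sub y(1) by (auto simp: ys_def)
    ultimately have "P ys" by (rule less.hyps)
    moreover have "P ys \<longleftrightarrow> P xs"
      unfolding ys_def using swap[OF less.prems xX' y(1)] y \<open>x \<notin> B\<close> by simp
    ultimately show ?thesis by simp
  qed
qed

section \<open>Colourings with a prescribed kernel\<close>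

lemma quotient_colour_kernel: "X // colour_kernel X \<phi> = (\<lambda>v. {x\<in>X. \<phi> x = v}) ` (\<phi> ` X)"
proof -
  have "colour_kernel X \<phi> `` {x} = {y\<in>X. \<phi> y = \<phi> x}" if "x \<in> X" for x
    using that by (auto simp: colour_kernel_def)
  then show ?thesis unfolding quotient_def by auto
qed

lemma card_quotient_colour_kernel: "card (X // colour_kernel X \<phi>) = card (\<phi> ` X)"
proof -
  have "inj_on (\<lambda>v. {x\<in>X. \<phi> x = v}) (\<phi> ` X)"
    by (rule inj_onI) blast
  then show ?thesis unfolding quotient_colour_kernel by (rule card_image)
qed

lemma ex_onto_colouring_with_kernel:
  assumes "finite X" and eqv: "equiv X E" and "card (X // E) = m"
  shows "\<exists>\<phi>\<in>X \<rightarrow>\<^sub>E {..<m}. \<phi> ` X = {..<m} \<and> colour_kernel X \<phi> = E"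
proof -
  have "finite (X // E)" using assms equiv_type[OF eqv] by (intro finite_quotient)
  then obtain \<beta> where \<beta>: "bij_betw \<beta> (X // E) {..<m}"
    using ex_bij_betw_finite_nat assms by (metis atLeast0LessThan)
  define \<phi> where "\<phi> = restrict (\<lambda>x. \<beta> (E``{x})) X"
  have "\<phi> ` X = \<beta> ` (X // E)" by (auto simp: \<phi>_def quotient_def)
  then have onto: "\<phi> ` X = {..<m}" using \<beta> by (simp add: bij_betw_def)
  moreover have "\<phi> \<in> X \<rightarrow>\<^sub>E {..<m}" using onto by (auto simp: \<phi>_def)
  moreover have "colour_kernel X \<phi> = E"
  proof (intro set_eqI iffI; clarify)
    fix x y assume "(x, y) \<in> colour_kernel X \<phi>"
    then have xy: "x \<in> X" "y \<in> X" "\<beta> (E``{x}) = \<beta> (E``{y})" by (auto simp: colour_kernel_def \<phi>_def)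
    then have "E``{x} = E``{y}"
      using \<beta> quotientI[OF xy(1)] quotientI[OF xy(2)] by (auto simp: bij_betw_def dest: inj_onD)
    then show "(x, y) \<in> E" using equiv_class_eq_iff[OF eqv] xy by blast
  next
    fix x y assume "(x, y) \<in> E"
    then show "(x, y) \<in> colour_kernel X \<phi>"
      using equiv_class_eq_iff[OF eqv] by (auto simp: colour_kernel_def \<phi>_def)
  qed
  ultimately show ?thesis by blast
qed

lemma permuted_onto_colouring:
  assumes p: "p permutes {..<m}" and onto: "\<phi>0 ` X = {..<m}"
  shows "restrict (p \<circ> \<phi>0) X \<in> X \<rightarrow>\<^sub>E {..<m}" "restrict (p \<circ> \<phi>0) X ` X = {..<m}"
    "colour_kernel X (restrict (p \<circ> \<phi>0) X) = colour_kernel X \<phi>0"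
proof -
  have "restrict (p \<circ> \<phi>0) X ` X = p ` \<phi>0 ` X" by auto
  then show im: "restrict (p \<circ> \<phi>0) X ` X = {..<m}" using onto by (simp add: permutes_image[OF p])
  then show "restrict (p \<circ> \<phi>0) X \<in> X \<rightarrow>\<^sub>E {..<m}" by auto
  show "colour_kernel X (restrict (p \<circ> \<phi>0) X) = colour_kernel X \<phi>0"
    using permutes_inj[OF p] by (auto simp: colour_kernel_def inj_eq)
qed

lemma onto_colouring_same_kernel_permuted:
  assumes \<phi>0: "\<phi>0 ` X = {..<m}" and \<psi>: "\<psi> \<in> X \<rightarrow>\<^sub>E {..<m}" "\<psi> ` X = {..<m}"
    and kernel: "colour_kernel X \<psi> = colour_kernel X \<phi>0"
  obtains p where "p permutes {..<m}" "\<psi> = restrict (p \<circ> \<phi>0) X"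
proof -
  define sel where "sel v = (SOME x. x \<in> X \<and> \<phi>0 x = v)" for v
  have sel: "sel v \<in> X \<and> \<phi>0 (sel v) = v" if "v < m" for v
  proof -
    have "\<exists>x. x \<in> X \<and> \<phi>0 x = v" using \<phi>0 that by (metis imageE lessThan_iff)
    then show ?thesis unfolding sel_def by (rule someI_ex)
  qed
  define p where "p v = (if v < m then \<psi> (sel v) else v)" for v
  have factors: "\<psi> x = p (\<phi>0 x)" if "x \<in> X" for x
  proof -
    have "\<phi>0 x < m" using \<phi>0 that by auto
    then have "(sel (\<phi>0 x), x) \<in> colour_kernel X \<phi>0" using sel[of "\<phi>0 x"] that by (auto simp: colour_kernel_def)
    then have "(sel (\<phi>0 x), x) \<in> colour_kernel X \<psi>" using kernel by simp
    then show ?thesis using \<open>\<phi>0 x < m\<close> by (simp add: colour_kernel_def p_def)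
  qed
  have "p ` {..<m} = \<psi> ` X"
  proof (intro set_eqI iffI)
    fix w assume "w \<in> \<psi> ` X"
    then obtain x where "x \<in> X" "w = \<psi> x" by blast
    then show "w \<in> p ` {..<m}" using factors \<phi>0 by blast
  next
    fix w assume "w \<in> p ` {..<m}"
    then obtain v where "v < m" "w = \<psi> (sel v)" by (auto simp: p_def)
    then show "w \<in> \<psi> ` X" using sel[of v] by blast
  qed
  then have "bij_betw p {..<m} {..<m}"
    using \<psi>(2) by (simp add: bij_betw_def eq_card_imp_inj_on[of "{..<m}" p])
  then have "p permutes {..<m}" by (rule bij_imp_permutes) (simp add: p_def)
  moreover have "\<psi> = restrict (p \<circ> \<phi>0) X"
    using factors \<psi>(1) by (auto simp: PiE_def extensional_def)
  ultimately show ?thesis by (rule that)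
qed

lemma card_onto_colourings_same_kernel:
  assumes "\<phi>0 ` X = {..<m}"
  shows "card {\<phi>\<in>X \<rightarrow>\<^sub>E {..<m}. \<phi> ` X = {..<m} \<and> colour_kernel X \<phi> = colour_kernel X \<phi>0} = fact m"
    (is "card ?S = _")
proof -
  let ?f = "\<lambda>p. restrict (p \<circ> \<phi>0) X"
  have "?S = ?f ` {p. p permutes {..<m}}"
  proof (intro set_eqI iffI)
    fix \<psi> assume "\<psi> \<in> ?S"
    then obtain p where "p permutes {..<m}" "\<psi> = ?f p"
      using onto_colouring_same_kernel_permuted[OF assms] by blast
    then show "\<psi> \<in> ?f ` {p. p permutes {..<m}}" by blast
  next
    fix \<psi> assume "\<psi> \<in> ?f ` {p. p permutes {..<m}}"
    then obtain p where "p permutes {..<m}" "\<psi> = ?f p" by blast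
    then show "\<psi> \<in> ?S" using permuted_onto_colouring[OF _ assms] by blast
  qed
  moreover have "inj_on ?f {p. p permutes {..<m}}"
  proof (rule inj_onI, rule ext)
    fix p q v assume p: "p \<in> {p. p permutes {..<m}}" and q: "q \<in> {p. p permutes {..<m}}"
      and eq: "?f p = ?f q"
    show "p v = q v"
    proof (cases "v < m")
      case True
      then obtain x where "x \<in> X" "v = \<phi>0 x" using assms by (metis imageE lessThan_iff)
      then show ?thesis using fun_cong[OF eq, of x] by simp
    next
      case False
      then show ?thesis using p q by (simp add: permutes_def)
    qed
  qed
  ultimately show ?thesis by (simp add: card_image card_permutations)
qed

lemma card_onto_colourings_with_kernel:
  assumes "finite X" and eqv: "equiv X E"
  shows "card {\<phi>\<in>X \<rightarrow>\<^sub>E {..<m}. \<phi> ` X = {..<m} \<and> colour_kernel X \<phi> = E} =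
    (if card (X // E) = m then fact m else 0)"
proof (cases "card (X // E) = m")
  case True
  then obtain \<phi>0 where "\<phi>0 \<in> X \<rightarrow>\<^sub>E {..<m}" "\<phi>0 ` X = {..<m}" "colour_kernel X \<phi>0 = E"
    using ex_onto_colouring_with_kernel[OF assms] by blast
  then show ?thesis using True card_onto_colourings_same_kernel[of \<phi>0 X m] by simp
next
  case False
  then have "{\<phi>\<in>X \<rightarrow>\<^sub>E {..<m}. \<phi> ` X = {..<m} \<and> colour_kernel X \<phi> = E} = {}"
    using card_quotient_colour_kernel by fastforce
  then show ?thesis using False by (simp only: card.empty if_False)
qed

section \<open>Counting the members of a hereditary class by colourings\<close>

definition canon_carrier :: "nat \<Rightarrow> (nat \<Rightarrow> nat) \<Rightarrow> nat set" where
  "canon_carrier m s = prod_encode ` (SIGMA c:{..<m}. {..<s c})"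

definition canon_colour :: "nat \<Rightarrow> nat" where
  "canon_colour x = fst (prod_decode x)"

lemma finite_canon_carrier: "finite (canon_carrier m s)"
  unfolding canon_carrier_def by (intro finite_imageI finite_SigmaI) auto

lemma card_canon_colour_class:
  assumes "c < m"
  shows "card {y\<in>canon_carrier m s. canon_colour y = c} = s c"
proof -
  have "{y\<in>canon_carrier m s. canon_colour y = c} = prod_encode ` ({c} \<times> {..<s c})"
    using assms by (auto simp: canon_carrier_def canon_colour_def)
  then show ?thesis by (simp add: card_image inj_prod_encode card_cartesian_product)
qed

lemma canon_carrier_mono: "thresh_le t m s s' \<Longrightarrow> canon_carrier m s \<subseteq> canon_carrier m s'"
  unfolding canon_carrier_def thresh_le_def by (auto intro!: image_mono)

locale hereditary_class =
  fixes R :: "'r set" and ar :: "'r \<Rightarrow> nat" and C :: "'c set" and H :: "('r, 'c) struc set"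
  assumes finite_R: "finite R" and finite_C: "finite C" and hereditary: "hereditary R ar C H"
begin

lemma wf_struc_if_mem: "M \<in> H \<Longrightarrow> wf_struc R ar C M"
  using hereditary unfolding hereditary_def by blast

lemma mem_if_is_iso: "M \<in> H \<Longrightarrow> wf_struc R ar C N \<Longrightarrow> is_iso R ar C f M N \<Longrightarrow> N \<in> H"
  using hereditary unfolding hereditary_def by blast

lemma mem_if_substruc: "M \<in> H \<Longrightarrow> substruc R ar C N M \<Longrightarrow> N \<in> H"
  using hereditary unfolding hereditary_def by blast

lemma finite_members_with_carrier: "finite X \<Longrightarrow> finite {M\<in>H. carrier M = X}"
  by (rule finite_subset[OF _ finite_wf_strucs[OF finite_R finite_C, of X ar]]) (auto dest: wf_struc_if_mem)

definition kernel_strucs :: "nat set \<Rightarrow> (nat \<Rightarrow> nat) \<Rightarrow> ('r, 'c) struc set" where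
  "kernel_strucs X \<phi> = {M\<in>H. carrier M = X \<and> swap_equiv R ar C M = colour_kernel X \<phi>}"

definition kernel_count :: "nat set \<Rightarrow> (nat \<Rightarrow> nat) \<Rightarrow> nat" where
  "kernel_count X \<phi> = card (kernel_strucs X \<phi>)"

lemma finite_kernel_strucs: "finite X \<Longrightarrow> finite (kernel_strucs X \<phi>)"
  by (rule finite_subset[OF _ finite_members_with_carrier]) (auto simp: kernel_strucs_def)

lemma is_iso_transp_map_if_kernel_strucs:
  "M \<in> kernel_strucs X \<phi> \<Longrightarrow> x \<in> X \<Longrightarrow> y \<in> X \<Longrightarrow> \<phi> x = \<phi> y \<Longrightarrow> is_iso R ar C (transp_map x y) M M"
  unfolding kernel_strucs_def colour_kernel_def swap_equiv_def by auto

lemma relabel_mem_kernel_strucs: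
  assumes M: "M \<in> kernel_strucs X \<phi>" and bij: "bij_betw \<pi> X Y"
    and \<psi>: "\<And>x. x \<in> X \<Longrightarrow> \<psi> (\<pi> x) = \<phi> x"
  shows "relabel C \<pi> M \<in> kernel_strucs Y \<psi>"
proof -
  let ?N = "relabel C \<pi> M" and ?g = "inv_into X \<pi>"
  have MH: "M \<in> H" and cM: "carrier M = X" and swM: "swap_equiv R ar C M = colour_kernel X \<phi>"
    using M by (auto simp: kernel_strucs_def)
  have wM: "wf_struc R ar C M" by (rule wf_struc_if_mem[OF MH])
  have inj: "inj_on \<pi> (carrier M)" using bij cM by (simp add: bij_betw_def)
  have wN: "wf_struc R ar C ?N" by (rule wf_struc_relabel[OF wM inj])
  have iN: "is_iso R ar C \<pi> M ?N" by (rule is_iso_relabel[OF inj])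
  have cN: "carrier ?N = Y" using bij cM by (simp add: relabel_def bij_betw_def)
  have ig: "is_iso R ar C ?g ?N M" using is_iso_inv_into[OF wM iN] cM by simp
  have gY: "?g y \<in> X" "\<pi> (?g y) = y" "\<psi> y = \<phi> (?g y)" if "y \<in> Y" for y
    using bij that \<psi>[of "?g y"] by (auto simp: bij_betw_def inv_into_into f_inv_into_f)
  have "swap_equiv R ar C ?N = colour_kernel Y \<psi>"
  proof (intro set_eqI iffI; clarify)
    fix y1 y2 assume p: "(y1, y2) \<in> swap_equiv R ar C ?N"
    then have "y1 \<in> Y" "y2 \<in> Y" using cN by (auto simp: swap_equiv_def)
    moreover have "(?g y1, ?g y2) \<in> swap_equiv R ar C M"
      using swap_equiv_is_iso_image[OF wN wM ig p] .
    ultimately show "(y1, y2) \<in> colour_kernel Y \<psi>" using swM gY by (auto simp: colour_kernel_def)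
  next
    fix y1 y2 assume "(y1, y2) \<in> colour_kernel Y \<psi>"
    then have y: "y1 \<in> Y" "y2 \<in> Y" "\<psi> y1 = \<psi> y2" by (auto simp: colour_kernel_def)
    then have "(?g y1, ?g y2) \<in> swap_equiv R ar C M" using swM gY by (auto simp: colour_kernel_def)
    then have "(\<pi> (?g y1), \<pi> (?g y2)) \<in> swap_equiv R ar C ?N" by (rule swap_equiv_is_iso_image[OF wM wN iN])
    then show "(y1, y2) \<in> swap_equiv R ar C ?N" using gY y by simp
  qed
  then show ?thesis using mem_if_is_iso[OF MH wN iN] cN by (simp add: kernel_strucs_def)
qed

lemma kernel_count_le_bij_betw:
  assumes "finite X" and bij: "bij_betw \<pi> X Y" and \<psi>: "\<And>x. x \<in> X \<Longrightarrow> \<psi> (\<pi> x) = \<phi> x"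
  shows "kernel_count X \<phi> \<le> kernel_count Y \<psi>"
  unfolding kernel_count_def
proof (rule card_inj_on_le[where f="relabel C \<pi>"])
  show "finite (kernel_strucs Y \<psi>)"
    using assms bij_betw_finite finite_kernel_strucs by blast
  show "relabel C \<pi> ` kernel_strucs X \<phi> \<subseteq> kernel_strucs Y \<psi>"
    using relabel_mem_kernel_strucs[of _ X \<phi> \<pi> Y \<psi>] bij \<psi> by blast
  show "inj_on (relabel C \<pi>) (kernel_strucs X \<phi>)"
  proof (rule inj_onI)
    fix M1 M2 assume "M1 \<in> kernel_strucs X \<phi>" "M2 \<in> kernel_strucs X \<phi>" and eq: "relabel C \<pi> M1 = relabel C \<pi> M2"
    then have w: "wf_struc R ar C M1" "wf_struc R ar C M2" and c: "carrier M1 = X" "carrier M2 = X"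
      by (auto simp: kernel_strucs_def intro: wf_struc_if_mem)
    have inj: "inj_on \<pi> X" using bij by (simp add: bij_betw_def)
    have "is_iso R ar C \<pi> M1 (relabel C \<pi> M1)"
      by (rule is_iso_relabel) (simp add: c inj)
    moreover have "is_iso R ar C \<pi> M2 (relabel C \<pi> M1)"
      unfolding eq by (rule is_iso_relabel) (simp add: c inj)
    ultimately show "M1 = M2" using is_iso_same_map_eq[OF w] c by simp
  qed
qed

lemma kernel_count_bij_betw:
  assumes finX: "finite X" and bij: "bij_betw \<pi> X Y" and \<psi>: "\<And>x. x \<in> X \<Longrightarrow> \<psi> (\<pi> x) = \<phi> x"
  shows "kernel_count X \<phi> = kernel_count Y \<psi>"
proof (rule antisym)
  show "kernel_count X \<phi> \<le> kernel_count Y \<psi>"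
    using kernel_count_le_bij_betw[of X \<pi> Y \<psi> \<phi>] assms by blast
  have "\<phi> (inv_into X \<pi> y) = \<psi> y" if "y \<in> Y" for y
    using \<psi>[of "inv_into X \<pi> y"] that bij by (auto simp: bij_betw_def inv_into_into f_inv_into_f)
  then show "kernel_count Y \<psi> \<le> kernel_count X \<phi>"
    using finX bij bij_betw_finite bij_betw_inv_into kernel_count_le_bij_betw by metis
qed

context
  fixes X X' :: "nat set" and \<phi> :: "nat \<Rightarrow> nat" and A :: nat
  assumes finite_X': "finite X'" and subset: "X \<subseteq> X'"
    and big_classes: "\<And>x. x \<in> X' - X \<Longrightarrow> A + 2 \<le> card {y\<in>X. \<phi> y = \<phi> x}"
    and arity_le: "\<And>r. r \<in> R \<Longrightarrow> ar r \<le> A"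
begin

lemma cst_mem_if_kernel_strucs:
  assumes M: "M \<in> kernel_strucs X' \<phi>" and c: "c \<in> C"
  shows "cst M c \<in> X"
proof (rule ccontr)
  assume out: "cst M c \<notin> X"
  have "wf_struc R ar C M" "carrier M = X'" using M wf_struc_if_mem by (auto simp: kernel_strucs_def)
  then have "cst M c \<in> X'" using c by (simp add: wf_struc_def)
  then have "A + 2 \<le> card {y\<in>X. \<phi> y = \<phi> (cst M c)}" using big_classes out by auto
  then have "{y\<in>X. \<phi> y = \<phi> (cst M c)} \<noteq> {}" by (intro notI) simp
  then obtain y where y: "y \<in> X" "\<phi> y = \<phi> (cst M c)" by blast
  then have "(cst M c, y) \<in> swap_equiv R ar C M"
    using M \<open>cst M c \<in> X'\<close> subset by (auto simp: kernel_strucs_def colour_kernel_def)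
  then have "y = cst M c" using c by (rule swap_equiv_cst) simp
  then show False using y out by simp
qed

lemma inj_on_induced_kernel_strucs: "inj_on (induced X) (kernel_strucs X' \<phi>)"
proof (rule inj_onI)
  fix M1 M2 assume M1: "M1 \<in> kernel_strucs X' \<phi>" and M2: "M2 \<in> kernel_strucs X' \<phi>"
    and eq: "induced X M1 = induced X M2"
  have w: "wf_struc R ar C M1" "wf_struc R ar C M2" and c: "carrier M1 = X'" "carrier M2 = X'"
    using M1 M2 by (auto simp: kernel_strucs_def intro: wf_struc_if_mem)
  have "rel M1 r xs = rel M2 r xs" for r xs
  proof (cases "r \<in> R \<and> length xs = ar r \<and> set xs \<subseteq> X'")
    case False
    then show ?thesis using w c unfolding wf_struc_def by metis
  next
    case True
    then have r: "r \<in> R" by simp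
    let ?P = "\<lambda>ys. length ys = ar r \<longrightarrow> (rel M1 r ys \<longleftrightarrow> rel M2 r ys)"
    have "?P xs"
    proof (rule transport_tuple_induct[OF subset _ _ _ big_classes, of "{}"])
      fix ys x y assume "set ys \<subseteq> X'" "x \<in> X' - X" "y \<in> X" "\<phi> x = \<phi> y"
      then have iso1: "is_iso R ar C (transp_map x y) M1 M1" and iso2: "is_iso R ar C (transp_map x y) M2 M2"
        using is_iso_transp_map_if_kernel_strucs[OF M1] is_iso_transp_map_if_kernel_strucs[OF M2] subset
        by auto
      then show "?P (map (transp_map x y) ys) \<longleftrightarrow> ?P ys"
        using is_iso_relD[OF iso1 r, of ys] is_iso_relD[OF iso2 r, of ys] \<open>set ys \<subseteq> X'\<close> c by auto
    next
      fix ys assume "set ys \<subseteq> X"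
      then show "?P ys" using arg_cong[OF eq, of rel] by (auto simp: induced_def fun_eq_iff)
    qed (use True arity_le in auto)
    then show ?thesis using True by simp
  qed
  then show "M1 = M2"
    using c arg_cong[OF eq, of cst] by (intro struc.equality) (auto simp: induced_def)
qed

lemma swap_equiv_if_swap_equiv_induced:
  assumes M: "M \<in> kernel_strucs X' \<phi>" and ab: "(a, b) \<in> swap_equiv R ar C (induced X M)"
  shows "(a, b) \<in> swap_equiv R ar C M"
proof -
  have cM: "carrier M = X'" using M by (simp add: kernel_strucs_def)
  have a: "a \<in> X" "b \<in> X" and iN: "is_iso R ar C (transp_map a b) (induced X M) (induced X M)"
    using ab by (auto simp: swap_equiv_def induced_def)
  have "rel M r (map (transp_map a b) xs) = rel M r xs"
    if r: "r \<in> R" and xs: "length xs = ar r" "set xs \<subseteq> X'" for r xs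
  proof -
    have "card {a, b} \<le> 2" by (cases "a = b") auto
    let ?P = "\<lambda>ys. length ys = ar r \<longrightarrow> (rel M r (map (transp_map a b) ys) \<longleftrightarrow> rel M r ys)"
    have "?P xs"
    proof (rule transport_tuple_induct[OF subset _ _ _ big_classes, of "{a, b}"])
      fix ys x y assume ys: "set ys \<subseteq> X'" and x: "x \<in> X' - X" "x \<notin> {a, b}"
        and y: "y \<in> X" "\<phi> x = \<phi> y" "y \<notin> {a, b}"
      have iT: "is_iso R ar C (transp_map x y) M M"
        using is_iso_transp_map_if_kernel_strucs[OF M] x y subset by auto
      define zs where "zs = map (transp_map a b) ys"
      have "set zs \<subseteq> X'" using ys a subset by (auto simp: zs_def intro: transp_map_in)
      then have "length ys = ar r \<Longrightarrow> rel M r (map (transp_map x y) zs) = rel M r zs"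
        using is_iso_relD[OF iT r, of zs] cM by (simp add: zs_def)
      moreover have "length ys = ar r \<Longrightarrow> rel M r (map (transp_map x y) ys) = rel M r ys"
        using is_iso_relD[OF iT r, of ys] ys cM by simp
      moreover have "map (transp_map a b) (map (transp_map x y) ys) = map (transp_map x y) zs"
        using x y by (simp add: zs_def transp_map_disjoint_comm)
      ultimately show "?P (map (transp_map x y) ys) \<longleftrightarrow> ?P ys"
        unfolding zs_def by (metis length_map)
    next
      fix ys assume ys: "set ys \<subseteq> X"
      then have "set (map (transp_map a b) ys) \<subseteq> X" using a by (auto intro: transp_map_in)
      then show "?P ys" using is_iso_relD[OF iN r, of ys] ys by (auto simp: induced_def)
    qed (use a xs r arity_le \<open>card {a, b} \<le> 2\<close> in auto)
    then show ?thesis using xs by simp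
  qed
  moreover have "bij_betw (transp_map a b) (carrier M) (carrier M)"
    using a subset cM by (auto intro: bij_betw_transp_map)
  moreover have "\<forall>c\<in>C. cst M c = transp_map a b (cst M c)"
    using iN unfolding is_iso_def by (simp add: induced_def)
  ultimately have "is_iso R ar C (transp_map a b) M M"
    unfolding is_iso_def using cM by auto
  then show ?thesis using a subset cM by (auto simp: swap_equiv_def)
qed

lemma induced_mem_kernel_strucs:
  assumes M: "M \<in> kernel_strucs X' \<phi>"
  shows "induced X M \<in> kernel_strucs X \<phi>"
proof -
  have MH: "M \<in> H" and cM: "carrier M = X'" and swM: "swap_equiv R ar C M = colour_kernel X' \<phi>"
    using M by (auto simp: kernel_strucs_def)
  have "substruc R ar C (induced X M) M"
    using substruc_induced wf_struc_if_mem[OF MH] cst_mem_if_kernel_strucs[OF M] cM subset by blast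
  then have "induced X M \<in> H" by (rule mem_if_substruc[OF MH])
  moreover have "swap_equiv R ar C (induced X M) = colour_kernel X \<phi>"
  proof (intro set_eqI iffI; clarify)
    fix a b assume ab: "(a, b) \<in> swap_equiv R ar C (induced X M)"
    then have "(a, b) \<in> colour_kernel X' \<phi>"
      using swap_equiv_if_swap_equiv_induced[OF M] swM by simp
    moreover have "a \<in> X" "b \<in> X" using ab by (auto simp: swap_equiv_def induced_def)
    ultimately show "(a, b) \<in> colour_kernel X \<phi>" by (simp add: colour_kernel_def)
  next
    fix a b assume "(a, b) \<in> colour_kernel X \<phi>"
    then have "a \<in> X" "b \<in> X" "is_iso R ar C (transp_map a b) M M"
      using is_iso_transp_map_if_kernel_strucs[OF M] subset by (auto simp: colour_kernel_def)
    then show "(a, b) \<in> swap_equiv R ar C (induced X M)"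
      using is_iso_transp_map_induced subset cM by (auto simp: swap_equiv_def induced_def)
  qed
  ultimately show ?thesis by (simp add: kernel_strucs_def induced_def)
qed

lemma kernel_count_antimono: "kernel_count X' \<phi> \<le> kernel_count X \<phi>"
  unfolding kernel_count_def
proof (rule card_inj_on_le[OF inj_on_induced_kernel_strucs])
  show "induced X ` kernel_strucs X' \<phi> \<subseteq> kernel_strucs X \<phi>"
    using induced_mem_kernel_strucs by blast
  show "finite (kernel_strucs X \<phi>)"
    using finite_kernel_strucs finite_subset[OF subset finite_X'] by blast
qed

end

definition canon_count :: "nat \<Rightarrow> (nat \<Rightarrow> nat) \<Rightarrow> nat" where
  "canon_count m s = kernel_count (canon_carrier m s) canon_colour"

definition onto_count :: "nat \<Rightarrow> (nat \<Rightarrow> nat) \<Rightarrow> nat" where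
  "onto_count m s = (if \<forall>c<m. 1 \<le> s c then canon_count m s else 0)"

lemma canon_count_antimono:
  assumes arity_le: "\<And>r. r \<in> R \<Longrightarrow> ar r \<le> A" and le: "thresh_le (A + 2) m s s'"
  shows "canon_count m s' \<le> canon_count m s"
  unfolding canon_count_def
proof (rule kernel_count_antimono[OF finite_canon_carrier canon_carrier_mono[OF le] _ arity_le])
  fix x assume "x \<in> canon_carrier m s' - canon_carrier m s"
  then obtain c i where ci: "x = prod_encode (c, i)" "c < m" "i < s' c" "\<not> i < s c"
    unfolding canon_carrier_def by auto
  then have "A + 2 \<le> s c" using le unfolding thresh_le_def by fastforce
  moreover have "canon_colour x = c" using ci by (simp add: canon_colour_def)
  ultimately show "A + 2 \<le> card {y \<in> canon_carrier m s. canon_colour y = canon_colour x}"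
    using card_canon_colour_class[OF ci(2)] by simp
qed

lemma thresh_antitone_onto_count:
  assumes "\<And>r. r \<in> R \<Longrightarrow> ar r \<le> A"
  shows "thresh_antitone (A + 2) m (onto_count m)"
  unfolding thresh_antitone_def
proof (intro allI impI)
  fix s s' assume le: "thresh_le (A + 2) m s s'"
  show "onto_count m s' \<le> onto_count m s"
  proof (cases "\<forall>c<m. 1 \<le> s' c")
    case True
    then have "\<forall>c<m. 1 \<le> s c" using le unfolding thresh_le_def by fastforce
    then show ?thesis using True canon_count_antimono[OF assms le] by (simp add: onto_count_def)
  qed (auto simp: onto_count_def)
qed

lemma kernel_count_eq_canon_count:
  assumes finX: "finite X" and im: "\<phi> ` X \<subseteq> {..<m}"
  shows "kernel_count X \<phi> = canon_count m (class_sizes X \<phi>)"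
proof -
  define F where "F c = {x\<in>X. \<phi> x = c}" for c
  have "\<forall>c. \<exists>h. bij_betw h (F c) {0..<card (F c)}"
    using finX by (auto simp: F_def intro: ex_bij_betw_finite_nat)
  then obtain h where h: "\<And>c. bij_betw (h c) (F c) {0..<card (F c)}" by metis
  define \<pi> where "\<pi> x = prod_encode (\<phi> x, h (\<phi> x) x)" for x
  have sizes: "class_sizes X \<phi> c = card (F c)" for c by (simp add: class_sizes_def F_def)
  have "inj_on \<pi> X"
  proof (rule inj_onI)
    fix x x' assume "x \<in> X" "x' \<in> X" "\<pi> x = \<pi> x'"
    then have "x \<in> F (\<phi> x)" "x' \<in> F (\<phi> x)" "h (\<phi> x) x = h (\<phi> x) x'" by (auto simp: \<pi>_def F_def)
    then show "x = x'" using h[of "\<phi> x"] by (auto simp: bij_betw_def dest: inj_onD)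
  qed
  moreover have "\<pi> ` X = canon_carrier m (class_sizes X \<phi>)"
  proof (intro set_eqI iffI)
    fix y assume "y \<in> \<pi> ` X"
    then obtain x where x: "x \<in> X" "y = \<pi> x" by auto
    then have "h (\<phi> x) x < card (F (\<phi> x))" using h[of "\<phi> x"] by (auto simp: bij_betw_def F_def)
    then show "y \<in> canon_carrier m (class_sizes X \<phi>)" using x im sizes by (auto simp: canon_carrier_def \<pi>_def)
  next
    fix y assume "y \<in> canon_carrier m (class_sizes X \<phi>)"
    then obtain c i where ci: "y = prod_encode (c, i)" "i < card (F c)"
      unfolding canon_carrier_def sizes by auto
    then have "i \<in> h c ` F c" using h[of c] by (auto simp: bij_betw_def)
    then obtain x where "x \<in> F c" "h c x = i" by blast
    then show "y \<in> \<pi> ` X" using ci by (auto simp: \<pi>_def F_def)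
  qed
  ultimately have "kernel_count X \<phi> = kernel_count (canon_carrier m (class_sizes X \<phi>)) canon_colour"
    by (intro kernel_count_bij_betw[OF finX]) (auto simp: bij_betw_def \<pi>_def canon_colour_def)
  then show ?thesis by (simp add: canon_count_def)
qed

lemma onto_count_class_sizes:
  assumes finX: "finite X" and \<phi>: "\<phi> \<in> X \<rightarrow>\<^sub>E {..<m}"
  shows "onto_count m (class_sizes X \<phi>) = (if \<phi> ` X = {..<m} then kernel_count X \<phi> else 0)"
proof -
  have im: "\<phi> ` X \<subseteq> {..<m}" using \<phi> by auto
  have "1 \<le> class_sizes X \<phi> c \<longleftrightarrow> c \<in> \<phi> ` X" for c
    using finX by (auto simp: class_sizes_def Suc_le_eq card_gt_0_iff)
  then have "(\<forall>c<m. 1 \<le> class_sizes X \<phi> c) \<longleftrightarrow> \<phi> ` X = {..<m}" using im by auto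
  then show ?thesis unfolding onto_count_def using kernel_count_eq_canon_count[OF finX im] by simp
qed

(* Every structure M on X is counted once for each onto colouring whose kernel is swap_equiv M. *)
lemma colouring_sum_onto_count:
  assumes finX: "finite X"
  shows "colouring_sum X m (onto_count m) =
    (\<Sum>M\<in>{M\<in>H. carrier M = X}. of_nat (if card (X // swap_equiv R ar C M) = m then fact m else 0))"
proof -
  let ?HX = "{M\<in>H. carrier M = X}" and ?P = "X \<rightarrow>\<^sub>E {..<m}"
  let ?ind = "\<lambda>\<phi> M. if \<phi> ` X = {..<m} \<and> colour_kernel X \<phi> = swap_equiv R ar C M then 1 else 0 :: rat"
  have finHX: "finite ?HX" by (rule finite_members_with_carrier[OF finX])
  have finP: "finite ?P" using finX by (intro finite_PiE) auto
  have "colouring_sum X m (onto_count m) = (\<Sum>\<phi>\<in>?P. \<Sum>M\<in>?HX. ?ind \<phi> M)"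
    unfolding colouring_sum_def
  proof (rule sum.cong[OF refl])
    fix \<phi> assume \<phi>: "\<phi> \<in> ?P"
    have "kernel_strucs X \<phi> = {M\<in>?HX. colour_kernel X \<phi> = swap_equiv R ar C M}"
      by (auto simp: kernel_strucs_def)
    then show "of_nat (onto_count m (class_sizes X \<phi>)) = (\<Sum>M\<in>?HX. ?ind \<phi> M)"
      using onto_count_class_sizes[OF finX \<phi>] finHX by (simp add: kernel_count_def sum.inter_filter[symmetric])
  qed
  also have "\<dots> = (\<Sum>M\<in>?HX. \<Sum>\<phi>\<in>?P. ?ind \<phi> M)" by (rule sum.swap)
  also have "\<dots> = (\<Sum>M\<in>?HX. of_nat (if card (X // swap_equiv R ar C M) = m then fact m else 0))"
  proof (rule sum.cong[OF refl])
    fix M assume "M \<in> ?HX"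
    then have eqv: "equiv X (swap_equiv R ar C M)" using equiv_swap_equiv[of M] by simp
    show "(\<Sum>\<phi>\<in>?P. ?ind \<phi> M) = of_nat (if card (X // swap_equiv R ar C M) = m then fact m else 0)"
      using card_onto_colourings_with_kernel[OF finX eqv, of m] finP
      by (simp add: sum.inter_filter[symmetric])
  qed
  finally show ?thesis .
qed

lemma card_H_n_eq_colouring_seq:
  assumes classes_le: "\<And>M. M \<in> H \<Longrightarrow> card (carrier M // swap_equiv R ar C M) \<le> k"
  shows "(of_nat (card (H_n H n)) :: rat) = (\<Sum>m\<le>k. (1 / fact m) * colouring_seq m (onto_count m) n)"
proof -
  let ?HX = "{M\<in>H. carrier M = {1..n}}" and ?q = "\<lambda>M. card ({1..n} // swap_equiv R ar C M)"
  have "(\<Sum>m\<le>k. (1 / fact m) * colouring_seq m (onto_count m) n) =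
        (\<Sum>m\<le>k. \<Sum>M\<in>?HX. if ?q M = m then 1 else 0 :: rat)"
    using colouring_sum_eq_colouring_seq[of "{1..n}"] colouring_sum_onto_count[of "{1..n}"]
    by (simp add: sum_distrib_left if_distrib cong: if_cong)
  also have "\<dots> = (\<Sum>M\<in>?HX. \<Sum>m\<le>k. if ?q M = m then 1 else 0 :: rat)" by (rule sum.swap)
  also have "\<dots> = (\<Sum>M\<in>?HX. 1)"
  proof (rule sum.cong[OF refl])
    fix M assume "M \<in> ?HX"
    then have "?q M \<le> k" using classes_le[of M] by simp
    then show "(\<Sum>m\<le>k. if ?q M = m then 1 else 0 :: rat) = 1" by simp
  qed
  also have "\<dots> = of_nat (card (H_n H n))" by (simp add: H_n_def)
  finally show ?thesis by simp
qed

end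

theorem mainTheorem4:
  fixes R :: "'r set" and ar :: "'r \<Rightarrow> nat" and C :: "'c set"
    and H :: "('r, 'c) struc set"
  assumes "finite R" and "finite C"
    and "hereditary R ar C H" and "basic R ar C H" and "\<not> trivial H"
  shows "\<exists>(k::nat) (p :: nat \<Rightarrow> rat poly). \<exists>N. \<forall>n\<ge>N.
           of_nat (card (H_n H n)) = (\<Sum>i=1..k. poly (p i) (of_nat n) * of_nat i ^ n)"
proof -
  interpret hereditary_class R ar C H using assms(1-3) by unfold_locales
  obtain k where k: "\<And>M. M \<in> H \<Longrightarrow> card (carrier M // swap_equiv R ar C M) \<le> k"
    using assms(4) unfolding basic_def by blast
  define A where "A = Max (insert 0 (ar ` R))"
  have arity_le: "\<And>r. r \<in> R \<Longrightarrow> ar r \<le> A" unfolding A_def using finite_R by auto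
  have "(\<lambda>n. \<Sum>m\<le>k. (1 / fact m) * colouring_seq m (onto_count m) n) \<in> binom_pow_span"
    by (intro binom_pow_span_sum binom_pow_span.smult
        colouring_seq_in_binom_pow_span[OF thresh_antitone_onto_count[OF arity_le]]) simp
  then have "(\<lambda>n. of_nat (card (H_n H n))) \<in> binom_pow_span"
    by (rule binom_pow_span_cong) (simp add: card_H_n_eq_colouring_seq[OF k])
  then show ?thesis
    using binom_pow_span_imp_eventually_exp_poly unfolding eventually_exp_poly_def by blast
qed

end
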